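(* Let $\mu>1/2$, $0<\nu<1/2$, $g\in X$, and $f=F-(\mu-\nu)\theta$. Then: (1) there is a constant $c(\mu,\nu)$ depending only on $\mu,\nu$ such that $$|f(x)|\le c(\mu,\nu)e^{4\|g\|_\infty}|x|^{1-2\mu}+(\mu-\nu)|x|^{-1}\quad(|x|\ge1),\qquad |f(x)|\le 2(\mu-\nu)\pi\quad(x\in\mathbb{R}),$$ $$|f'(x)|\le c(\mu,\nu)e^{4\|g\|_\infty}\frac{1}{|x|^{2\nu}(x^2+1)^{\mu-\nu}}+(\mu-\nu)\frac1{x^2+1}\quad(x\ne0);$$ (2) if $\|g\|_\infty\le M$, then there is a constant $c(\mu,\nu,M)$ depending only on $\mu,\nu,M$ such that $$|T[g](x)|\le c(\mu,\nu,M)\big(|x|^{1/2-\mu}+|x|^{-1/2}\big)\quad\text{for }|x|\ge4.$$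
   Context: $X=\{g\in C(\mathbb{R})\cap L^\infty(\mathbb{R})\text{ real}:\ \lim_{x\to\pm\infty}g(x)=0\}$ with sup norm. $\theta:\mathbb{R}\to\mathbb{R}$ is the continuous branch of $\arg(x-i)$ in $(-\pi,0)$: $\theta(x)=\arctan(-1/x)$ for $x>0$, $\theta(0)=-\pi/2$, $\theta(x)=\arctan(-1/x)-\pi$ for $x<0$. For $g\in X$: $h^{-1}(0)=0$, $(h^{-1})'(x)=|x|^{\nu-1}(x^2+1)^{(\mu-\nu)/2}e^{g(x)}$; $\kappa>0$ with $\int_{\mathbb{R}}\frac{\kappa}{x h^{-1}(x)(h^{-1})'(x)}dx=(\mu-\nu)\pi$; $F$ continuous with $F'(x)=\frac{\kappa}{xh^{-1}(x)(h^{-1})'(x)}$ ($x\neq0$) and $F(+\infty)=0$ (so $F(-\infty)=-(\mu-\nu)\pi$); $T[g]=H(F-(\mu-\nu)\theta)$ with $H$ the Hilbert transform $Hf(x)=\frac1\pi\mathrm{p.v.}\int\frac{f(y)}{x-y}dy$. *)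

theory Defs
  imports "HOL-Analysis.Analysis"
begin

definition Xspace :: "(real \<Rightarrow> real) set" where
  "Xspace = {g. continuous_on UNIV g \<and> bounded (range g) \<and>
               (g \<longlongrightarrow> 0) at_top \<and> (g \<longlongrightarrow> 0) at_bot}"

definition supnorm :: "(real \<Rightarrow> real) \<Rightarrow> real" where
  "supnorm g = (SUP x. \<bar>g x\<bar>)"

text \<open>Continuous branch of arg(x - i) with values in (-pi, 0).\<close>
definition theta :: "real \<Rightarrow> real" where
  "theta x = (if x > 0 then arctan (-1/x) else if x = 0 then - pi / 2
              else arctan (-1/x) - pi)"

definition hdens :: "real \<Rightarrow> real \<Rightarrow> (real \<Rightarrow> real) \<Rightarrow> real \<Rightarrow> real" where
  "hdens \<mu> \<nu> g x = \<bar>x\<bar> powr (\<nu> - 1) * (x\<^sup>2 + 1) powr ((\<mu> - \<nu>) / 2) * exp (g x)"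

definition admissible ::
  "real \<Rightarrow> real \<Rightarrow> (real \<Rightarrow> real) \<Rightarrow> (real \<Rightarrow> real) \<Rightarrow> real \<Rightarrow> (real \<Rightarrow> real) \<Rightarrow> bool" where
  "admissible \<mu> \<nu> g hinv \<kappa> F \<longleftrightarrow>
     continuous_on UNIV hinv \<and> hinv 0 = 0 \<and>
     (\<forall>x. x \<noteq> 0 \<longrightarrow> (hinv has_real_derivative hdens \<mu> \<nu> g x) (at x)) \<and>
     \<kappa> > 0 \<and>
     integrable lborel (\<lambda>x. \<kappa> / (x * hinv x * hdens \<mu> \<nu> g x)) \<and>
     integral\<^sup>L lborel (\<lambda>x. \<kappa> / (x * hinv x * hdens \<mu> \<nu> g x)) = (\<mu> - \<nu>) * pi \<and>
     continuous_on UNIV F \<and>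
     (\<forall>x. x \<noteq> 0 \<longrightarrow> (F has_real_derivative \<kappa> / (x * hinv x * hdens \<mu> \<nu> g x)) (at x)) \<and>
     (F \<longlongrightarrow> 0) at_top"

definition hilbert :: "(real \<Rightarrow> real) \<Rightarrow> real \<Rightarrow> real" where
  "hilbert f x = (1 / pi) *
     Lim (at_right 0) (\<lambda>\<epsilon>. LINT y:{y. \<epsilon> < \<bar>x - y\<bar>}|lborel. f y / (x - y))"

end

theory Submission
  imports Defs
begin

(* F' = \<kappa>/(x hinv(x) (hinv)'(x)) is controlled by comparing hinv with the explicit function
   P(x) = |x|^\<nu> (x\<^sup>2+1)^((\<mu>-\<nu>)/2), whose slope differs from the density of hinv by at most the
   factors \<mu> e^|g| and e^|g|/\<nu>.  This gives x hinv(x) (hinv)'(x) \<ge> e^(-2|g|) |x|^(2\<nu>)(x\<^sup>2+1)^(\<mu>-\<nu>)/\<mu>,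
   while a lower bound for F' on [1,2] together with \<integral>F' = (\<mu>-\<nu>)\<pi> bounds \<kappa> by C e^(2|g|).
   Hence F' \<le> C e^(4|g|) |x|^(-2\<nu>)(x\<^sup>2+1)^(\<nu>-\<mu>); F increases from -(\<mu>-\<nu>)\<pi> to 0 and its tails
   are O(|x|^(1-2\<mu>)), while theta tends to -\<pi> and 0 like 1/|x|.
   Part (2) follows from a general decay estimate for the Hilbert transform (hilbert_transform_decay),
   proved by splitting the principal value into a near part, where f is Lipschitz, and a far part. *)

lemma increment_le_from_deriv:
  fixes u v u' v' :: "real \<Rightarrow> real"
  assumes "a \<le> b" "continuous_on {a..b} u" "continuous_on {a..b} v"
    and "\<And>t. a < t \<Longrightarrow> t < b \<Longrightarrow> (u has_real_derivative u' t) (at t)"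
    and "\<And>t. a < t \<Longrightarrow> t < b \<Longrightarrow> (v has_real_derivative v' t) (at t)"
    and "\<And>t. a < t \<Longrightarrow> t < b \<Longrightarrow> u' t \<le> v' t"
  shows "u b - u a \<le> v b - v a"
proof -
  have "(\<lambda>t. v t - u t) a \<le> (\<lambda>t. v t - u t) b"
  proof (rule DERIV_nonneg_imp_increasing_open[OF assms(1)])
    fix t assume "a < t" "t < b"
    then show "\<exists>d. ((\<lambda>t. v t - u t) has_real_derivative d) (at t) \<and> 0 \<le> d"
      using assms(4-6) by (intro exI[of _ "v' t - u' t"]) (auto intro: derivative_intros)
  qed (use assms(2,3) in \<open>intro continuous_intros\<close>)
  then show ?thesis by simp
qed

lemma increment_le_at_top:
  fixes u v u' v' :: "real \<Rightarrow> real"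
  assumes "continuous_on {y..} u" "continuous_on {y..} v"
    and "\<And>t. y < t \<Longrightarrow> (u has_real_derivative u' t) (at t)"
    and "\<And>t. y < t \<Longrightarrow> (v has_real_derivative v' t) (at t)"
    and "\<And>t. y < t \<Longrightarrow> u' t \<le> v' t"
    and "(u \<longlongrightarrow> U) at_top" "(v \<longlongrightarrow> V) at_top"
  shows "U - u y \<le> V - v y"
proof (rule tendsto_le[OF trivial_limit_at_top_linorder])
  show "((\<lambda>z. v z - v y) \<longlongrightarrow> V - v y) at_top" "((\<lambda>z. u z - u y) \<longlongrightarrow> U - u y) at_top"
    using assms(6,7) by (auto intro!: tendsto_intros)
  show "\<forall>\<^sub>F z in at_top. u z - u y \<le> v z - v y"
    using eventually_ge_at_top[of y]
  proof eventually_elim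
    case (elim z)
    show ?case
      by (rule increment_le_from_deriv[OF elim, where u' = u' and v' = v'])
        (use assms(1-5) in \<open>auto intro: continuous_on_subset\<close>)
  qed
qed

lemma increment_le_at_bot:
  fixes u v u' v' :: "real \<Rightarrow> real"
  assumes "continuous_on {..y} u" "continuous_on {..y} v"
    and "\<And>t. t < y \<Longrightarrow> (u has_real_derivative u' t) (at t)"
    and "\<And>t. t < y \<Longrightarrow> (v has_real_derivative v' t) (at t)"
    and "\<And>t. t < y \<Longrightarrow> u' t \<le> v' t"
    and "(u \<longlongrightarrow> U) at_bot" "(v \<longlongrightarrow> V) at_bot"
  shows "u y - U \<le> v y - V"
proof (rule tendsto_le[OF trivial_limit_at_bot_linorder])
  show "((\<lambda>s. v y - v s) \<longlongrightarrow> v y - V) at_bot" "((\<lambda>s. u y - u s) \<longlongrightarrow> u y - U) at_bot"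
    using assms(6,7) by (auto intro!: tendsto_intros)
  show "\<forall>\<^sub>F s in at_bot. u y - u s \<le> v y - v s"
    using eventually_le_at_bot[of y]
  proof eventually_elim
    case (elim s)
    show ?case
      by (rule increment_le_from_deriv[OF elim, where u' = u' and v' = v'])
        (use assms(1-5) in \<open>auto intro: continuous_on_subset\<close>)
  qed
qed

lemma theta_pos: "x > 0 \<Longrightarrow> theta x = - arctan (1/x)"
  by (simp add: theta_def arctan_minus)

lemma theta_neg: "x < 0 \<Longrightarrow> theta x = arctan (1/\<bar>x\<bar>) - pi"
  by (simp add: theta_def)

lemma theta_range: "- pi \<le> theta x \<and> theta x \<le> 0"
proof -
  have at: "0 \<le> arctan (1/\<bar>x\<bar>)" "arctan (1/\<bar>x\<bar>) < pi/2"
    using arctan_monotone'[of 0 "1/\<bar>x\<bar>"] arctan_bounded[of "1/\<bar>x\<bar>"] by auto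
  show ?thesis
  proof (cases x "0::real" rule: linorder_cases)
    case less
    then show ?thesis using at unfolding theta_neg[OF less] by linarith
  next
    case greater
    then show ?thesis using at unfolding theta_pos[OF greater] abs_of_pos[OF greater] by linarith
  qed (simp add: theta_def)
qed

lemma theta_deriv:
  assumes "x \<noteq> 0" shows "(theta has_real_derivative 1/(x\<^sup>2+1)) (at x)"
proof (cases "x > 0")
  case True
  have "((\<lambda>t. - arctan (1/t)) has_real_derivative 1/(x\<^sup>2+1)) (at x)"
    using True by (auto intro!: derivative_eq_intros simp: field_simps power2_eq_square)
  then show ?thesis
    by (rule has_field_derivative_transform_within_open[of _ _ _ "{0<..}"])
      (use True in \<open>auto simp: theta_pos\<close>)
next
  case False
  then have "x < 0" using assms by simp
  have "((\<lambda>t. arctan (-1/t) - pi) has_real_derivative 1/(x\<^sup>2+1)) (at x)"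
    using \<open>x < 0\<close> by (auto intro!: derivative_eq_intros simp: field_simps power2_eq_square)
  then show ?thesis
    by (rule has_field_derivative_transform_within_open[of _ _ _ "{..<0}"])
      (use \<open>x < 0\<close> in \<open>auto simp: theta_def\<close>)
qed

lemma theta_at_pos_infinity: "x \<ge> 1 \<Longrightarrow> \<bar>theta x\<bar> \<le> 1/x"
  using abs_arctan_le[of "1/x"] by (simp add: theta_pos)

lemma theta_at_neg_infinity: "x \<le> -1 \<Longrightarrow> 0 \<le> theta x + pi \<and> theta x + pi \<le> 1/\<bar>x\<bar>"
  using arctan_le_self[of "1/\<bar>x\<bar>"] arctan_monotone'[of 0 "1/\<bar>x\<bar>"] by (simp add: theta_neg)

lemma theta_measurable[measurable]: "theta \<in> borel_measurable borel"
  unfolding theta_def by measurable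

lemma abs_le_supnorm: assumes "g \<in> Xspace" shows "\<bar>g x\<bar> \<le> supnorm g"
proof -
  have "bounded (range g)" using assms by (simp add: Xspace_def)
  then have "bdd_above (range (\<lambda>x. \<bar>g x\<bar>))"
    by (auto simp: bounded_iff bdd_above_def)
  then show ?thesis unfolding supnorm_def by (rule cSUP_upper[rotated]) simp
qed

lemma lborel_integral_of_has_integral:
  fixes p :: "real \<Rightarrow> real"
  assumes "p \<in> borel_measurable borel" "(p has_integral I) UNIV" "\<And>y. 0 \<le> p y"
  shows "integrable lborel p" "integral\<^sup>L lborel p = I"
proof -
  have "p absolutely_integrable_on UNIV"
    using assms by (intro nonnegative_absolutely_integrable_1) (auto simp: integrable_on_def)
  then have "integrable lebesgue p" by (simp add: set_integrable_def)
  then show i: "integrable lborel p"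
    using integrable_completion[of p lborel] assms(1) by simp
  show "integral\<^sup>L lborel p = I"
    using has_integral_integral_lborel[OF i] assms(2) by (rule has_integral_unique)
qed

lemma lborel_integral_even_extension:
  fixes p :: "real \<Rightarrow> real"
  assumes "integrable lborel p"
  shows "integrable lborel (\<lambda>y. p y + p (- y))"
    "integral\<^sup>L lborel (\<lambda>y. p y + p (- y)) = 2 * integral\<^sup>L lborel p"
proof -
  have "integrable lborel (\<lambda>y. p (0 + (-1) * y))"
    using lborel_integrable_real_affine[OF assms, of "-1" 0] by simp
  moreover have "integral\<^sup>L lborel (\<lambda>y. p (0 + (-1) * y)) = integral\<^sup>L lborel p"
    using lborel_integral_real_affine[of "-1" p 0] by simp
  ultimately show "integrable lborel (\<lambda>y. p y + p (- y))"
    "integral\<^sup>L lborel (\<lambda>y. p y + p (- y)) = 2 * integral\<^sup>L lborel p"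
    using assms by simp_all
qed

lemma lborel_integral_powr_near_0:
  fixes c \<gamma> :: real assumes "0 < c" "0 < \<gamma>" "\<gamma> < 1"
  shows "integrable lborel (\<lambda>y. if \<bar>y\<bar> \<le> c then \<bar>y\<bar> powr (-\<gamma>) else 0)"
    "integral\<^sup>L lborel (\<lambda>y. if \<bar>y\<bar> \<le> c then \<bar>y\<bar> powr (-\<gamma>) else 0) = 2 * (c powr (1 - \<gamma>) / (1 - \<gamma>))"
proof -
  define p where "p y = (if y \<in> {0..c} then \<bar>y\<bar> powr (-\<gamma>) else 0)" for y
  have "((\<lambda>y. y powr (-\<gamma>)) has_integral (c powr (-\<gamma> + 1) / (-\<gamma> + 1))) {0..c}"
    using assms by (intro has_integral_powr_from_0) auto
  then have "((\<lambda>y. \<bar>y\<bar> powr (-\<gamma>)) has_integral (c powr (-\<gamma> + 1) / (-\<gamma> + 1))) {0..c}"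
    by (rule has_integral_eq[rotated]) auto
  moreover have "-\<gamma> + 1 = 1 - \<gamma>" by simp
  ultimately have "((\<lambda>y. \<bar>y\<bar> powr (-\<gamma>)) has_integral (c powr (1 - \<gamma>) / (1 - \<gamma>))) {0..c}"
    by metis
  then have int_p: "(p has_integral (c powr (1 - \<gamma>) / (1 - \<gamma>))) UNIV"
    unfolding p_def by (subst has_integral_restrict_UNIV)
  have "p \<in> borel_measurable borel" unfolding p_def[abs_def] by measurable
  moreover have "0 \<le> p y" for y by (simp add: p_def)
  ultimately have "integrable lborel p" "integral\<^sup>L lborel p = c powr (1 - \<gamma>) / (1 - \<gamma>)"
    using lborel_integral_of_has_integral[OF _ int_p] by blast+
  moreover have "(\<lambda>y. if \<bar>y\<bar> \<le> c then \<bar>y\<bar> powr (-\<gamma>) else 0) = (\<lambda>y. p y + p (- y))"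
    by (auto simp: p_def fun_eq_iff)
  ultimately show "integrable lborel (\<lambda>y. if \<bar>y\<bar> \<le> c then \<bar>y\<bar> powr (-\<gamma>) else 0)"
    "integral\<^sup>L lborel (\<lambda>y. if \<bar>y\<bar> \<le> c then \<bar>y\<bar> powr (-\<gamma>) else 0) = 2 * (c powr (1 - \<gamma>) / (1 - \<gamma>))"
    using lborel_integral_even_extension[of p] by simp_all
qed

lemma lborel_integral_powr_tail:
  fixes c \<gamma> :: real assumes "0 < c" "0 < \<gamma>"
  shows "integrable lborel (\<lambda>y. if c \<le> \<bar>y\<bar> then \<bar>y\<bar> powr (-1-\<gamma>) else 0)"
    "integral\<^sup>L lborel (\<lambda>y. if c \<le> \<bar>y\<bar> then \<bar>y\<bar> powr (-1-\<gamma>) else 0) = 2 * (c powr (-\<gamma>) / \<gamma>)"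
proof -
  define p where "p y = (if y \<in> {c..} then \<bar>y\<bar> powr (-1-\<gamma>) else 0)" for y
  have "((\<lambda>y. y powr (-1-\<gamma>)) has_integral -(c powr (-1-\<gamma>+1)) / (-1-\<gamma>+1)) {c..}"
    using assms by (intro has_integral_powr_to_inf) auto
  then have "((\<lambda>y. \<bar>y\<bar> powr (-1-\<gamma>)) has_integral -(c powr (-1-\<gamma>+1)) / (-1-\<gamma>+1)) {c..}"
    by (rule has_integral_eq[rotated]) (use assms in auto)
  moreover have "-(c powr (-1-\<gamma>+1)) / (-1-\<gamma>+1) = c powr (-\<gamma>) / \<gamma>"
    by (simp add: divide_minus_right)
  ultimately have "((\<lambda>y. \<bar>y\<bar> powr (-1-\<gamma>)) has_integral (c powr (-\<gamma>) / \<gamma>)) {c..}"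
    by metis
  then have int_p: "(p has_integral (c powr (-\<gamma>) / \<gamma>)) UNIV"
    unfolding p_def by (subst has_integral_restrict_UNIV)
  have "p \<in> borel_measurable borel" unfolding p_def[abs_def] by measurable
  moreover have "0 \<le> p y" for y by (simp add: p_def)
  ultimately have "integrable lborel p" "integral\<^sup>L lborel p = c powr (-\<gamma>) / \<gamma>"
    using lborel_integral_of_has_integral[OF _ int_p] by blast+
  moreover have "(\<lambda>y. if c \<le> \<bar>y\<bar> then \<bar>y\<bar> powr (-1-\<gamma>) else 0) = (\<lambda>y. p y + p (- y))"
    using assms by (auto simp: p_def fun_eq_iff)
  ultimately show "integrable lborel (\<lambda>y. if c \<le> \<bar>y\<bar> then \<bar>y\<bar> powr (-1-\<gamma>) else 0)"
    "integral\<^sup>L lborel (\<lambda>y. if c \<le> \<bar>y\<bar> then \<bar>y\<bar> powr (-1-\<gamma>) else 0) = 2 * (c powr (-\<gamma>) / \<gamma>)"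
    using lborel_integral_even_extension[of p] by simp_all
qed

lemma set_integral_abs_le_majorant:
  fixes \<phi> m :: "real \<Rightarrow> real"
  assumes [measurable]: "\<phi> \<in> borel_measurable borel" "S \<in> sets borel"
    and m_int: "integrable lborel m" and m_nonneg: "\<And>y. 0 \<le> m y"
    and dominated: "AE y in lborel. y \<in> S \<longrightarrow> \<bar>\<phi> y\<bar> \<le> m y"
  shows "set_integrable lborel S \<phi>" "\<bar>LINT y:S|lborel. \<phi> y\<bar> \<le> integral\<^sup>L lborel m"
proof -
  have AE_dominated: "AE y in lborel. norm (indicator S y *\<^sub>R \<phi> y) \<le> m y"
    using dominated by eventually_elim (use m_nonneg in \<open>auto split: split_indicator\<close>)
  show int: "set_integrable lborel S \<phi>"
    unfolding set_integrable_def
    by (rule Bochner_Integration.integrable_bound[OF m_int]) (use AE_dominated m_nonneg in auto)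
  have "\<bar>LINT y:S|lborel. \<phi> y\<bar> \<le> integral\<^sup>L lborel (\<lambda>y. norm (indicator S y *\<^sub>R \<phi> y))"
    unfolding set_lebesgue_integral_def real_norm_def[symmetric] by (rule integral_norm_bound)
  also have "\<dots> \<le> integral\<^sup>L lborel m"
    using int AE_dominated unfolding set_integrable_def by (intro integral_mono_AE[OF integrable_norm m_int])
  finally show "\<bar>LINT y:S|lborel. \<phi> y\<bar> \<le> integral\<^sup>L lborel m" .
qed

lemma set_integral_bounded_on_interval:
  fixes \<phi> :: "real \<Rightarrow> real"
  assumes [measurable]: "\<phi> \<in> borel_measurable borel" "S \<in> sets borel"
    and S: "S \<subseteq> {a..b}" and ab: "a \<le> b" and L: "0 \<le> L" and bound: "\<And>y. y \<in> S \<Longrightarrow> \<bar>\<phi> y\<bar> \<le> L"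
  shows "set_integrable lborel S \<phi>" "\<bar>LINT y:S|lborel. \<phi> y\<bar> \<le> L * (b - a)"
proof -
  have box: "integrable lborel (\<lambda>y. L * indicator {a..b} y :: real)"
    by (intro integrable_mult_right integrable_real_indicator) (auto simp: emeasure_lborel_Icc_eq)
  have "\<bar>\<phi> y\<bar> \<le> L * indicator {a..b} y" if "y \<in> S" for y
    using S bound[OF that] that by (auto split: split_indicator)
  then have "AE y in lborel. y \<in> S \<longrightarrow> \<bar>\<phi> y\<bar> \<le> L * indicator {a..b} y" by simp
  from set_integral_abs_le_majorant[OF _ _ box _ this] L ab
  show "set_integrable lborel S \<phi>" "\<bar>LINT y:S|lborel. \<phi> y\<bar> \<le> L * (b - a)"
    by auto
qed

(* The Hilbert kernel is odd about x, so it integrates to zero over any symmetric annulus e < |x-y| < R. *)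
lemma pv_odd_kernel:
  fixes x e R :: real
  shows "(LINT y:{y. e < \<bar>x - y\<bar> \<and> \<bar>x - y\<bar> < R}|lborel. 1 / (x - y)) = 0"
proof -
  define S where "S = {y. e < \<bar>x - y\<bar> \<and> \<bar>x - y\<bar> < R}"
  define \<phi> where "\<phi> y = indicator S y *\<^sub>R (1 / (x - y) :: real)" for y
  have reflect: "\<phi> (2 * x + (-1) * y) = - \<phi> y" for y
  proof -
    have "2 * x + (-1) * y \<in> S \<longleftrightarrow> y \<in> S" unfolding S_def by (simp add: abs_minus_commute)
    moreover have "1 / (x - (2 * x + (-1) * y)) = - (1 / (x - y))"
      by (simp add: divide_minus_right[symmetric])
    ultimately show ?thesis unfolding \<phi>_def by (simp split: split_indicator)
  qed
  have "integral\<^sup>L lborel \<phi> = \<bar>-1\<bar> *\<^sub>R integral\<^sup>L lborel (\<lambda>y. \<phi> (2 * x + (-1) * y))"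
    by (rule lborel_integral_real_affine) simp
  then have "integral\<^sup>L lborel \<phi> = 0" unfolding reflect by simp
  then show ?thesis unfolding set_lebesgue_integral_def \<phi>_def S_def .
qed

lemma pv_subtract_value:
  fixes f :: "real \<Rightarrow> real" and x e R :: real
  defines "S \<equiv> {y. e < \<bar>x - y\<bar> \<and> \<bar>x - y\<bar> < R}"
  assumes e: "0 < e" and [measurable]: "f \<in> borel_measurable borel"
    and diff_int: "set_integrable lborel S (\<lambda>y. (f y - f x) / (x - y))"
  shows "set_integrable lborel S (\<lambda>y. f y / (x - y))"
    "(LINT y:S|lborel. f y / (x - y)) = (LINT y:S|lborel. (f y - f x) / (x - y))"
proof -
  have [measurable]: "S \<in> sets borel" unfolding S_def by measurable
  have kernel_int: "set_integrable lborel S (\<lambda>y. f x * (1 / (x - y)))"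
  proof (intro set_integrable_mult_right set_integral_bounded_on_interval(1)[of _ _ "x - \<bar>R\<bar>" "x + \<bar>R\<bar>" "1/e"])
    fix y assume "y \<in> S"
    then have "e < \<bar>x - y\<bar>" by (simp add: S_def)
    then show "\<bar>1 / (x - y)\<bar> \<le> 1 / e" using e by (simp add: abs_divide frac_le)
  qed (use e in \<open>auto simp: S_def\<close>)
  have split: "f y / (x - y) = (f y - f x) / (x - y) + f x * (1 / (x - y))" if "y \<in> S" for y
    using that e by (auto simp: S_def diff_divide_distrib)
  show "set_integrable lborel S (\<lambda>y. f y / (x - y))"
    using set_integral_add(1)[OF diff_int kernel_int] by (subst set_integrable_cong[OF refl refl split]) auto
  have "(LINT y:S|lborel. f y / (x - y)) = (LINT y:S|lborel. (f y - f x) / (x - y) + f x * (1 / (x - y)))"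
    using split by (intro set_lebesgue_integral_cong) auto
  also have "\<dots> = (LINT y:S|lborel. (f y - f x) / (x - y)) + f x * (LINT y:S|lborel. 1 / (x - y))"
    unfolding set_integral_add(2)[OF diff_int kernel_int] set_integral_mult_right ..
  also have "(LINT y:S|lborel. 1 / (x - y)) = 0" unfolding S_def by (rule pv_odd_kernel)
  finally show "(LINT y:S|lborel. f y / (x - y)) = (LINT y:S|lborel. (f y - f x) / (x - y))" by simp
qed

lemma difference_quotient_integral:
  fixes f :: "real \<Rightarrow> real" and x R L r :: real
  assumes [measurable]: "f \<in> borel_measurable borel" "S \<in> sets borel" and L: "0 \<le> L"
    and lip: "\<And>y. \<bar>x - y\<bar> < R \<Longrightarrow> \<bar>f y - f x\<bar> \<le> L * \<bar>x - y\<bar>"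
    and S: "S \<subseteq> {x - r..x + r}" "0 \<le> r" "S \<subseteq> {y. \<bar>x - y\<bar> < R}"
  shows "set_integrable lborel S (\<lambda>y. (f y - f x) / (x - y))"
    "\<bar>LINT y:S|lborel. (f y - f x) / (x - y)\<bar> \<le> 2 * L * r"
proof -
  have quotient_bound: "\<bar>(f y - f x) / (x - y)\<bar> \<le> L" if "y \<in> S" for y
  proof (cases "y = x")
    case False
    then have "0 < \<bar>x - y\<bar>" by simp
    then show ?thesis using lip[of y] that S(3) by (auto simp: abs_divide divide_le_eq)
  qed (simp add: L)
  have "(\<lambda>y. (f y - f x) / (x - y)) \<in> borel_measurable borel" by measurable
  moreover have "x - r \<le> x + r" using S(2) by simp
  ultimately show "set_integrable lborel S (\<lambda>y. (f y - f x) / (x - y))"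
    "\<bar>LINT y:S|lborel. (f y - f x) / (x - y)\<bar> \<le> 2 * L * r"
    using set_integral_bounded_on_interval[OF _ assms(2) S(1) _ L quotient_bound] by (auto simp: algebra_simps)
qed

(* Truncating the principal value at scale e < R changes it by at most 2Le: outside the annulus
   e < |x-y| < R nothing changes, on the annulus f(x) may be subtracted (odd kernel), and the
   difference quotient is bounded by L on the remaining ball of radius e. *)
lemma pv_truncation_error:
  fixes f :: "real \<Rightarrow> real" and x R L e :: real
  assumes f_meas[measurable]: "f \<in> borel_measurable borel" and L: "0 \<le> L" and e: "0 < e" "e < R"
    and lip: "\<And>y. \<bar>x - y\<bar> < R \<Longrightarrow> \<bar>f y - f x\<bar> \<le> L * \<bar>x - y\<bar>"
    and far_int: "set_integrable lborel {y. R \<le> \<bar>x - y\<bar>} (\<lambda>y. f y / (x - y))"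
  defines "I_far \<equiv> LINT y:{y. R \<le> \<bar>x - y\<bar>}|lborel. f y / (x - y)"
    and "I_near \<equiv> LINT y:{y. 0 < \<bar>x - y\<bar> \<and> \<bar>x - y\<bar> < R}|lborel. (f y - f x) / (x - y)"
  shows "\<bar>(LINT y:{y. e < \<bar>x - y\<bar>}|lborel. f y / (x - y)) - (I_far + I_near)\<bar> \<le> 2 * L * e"
proof -
  define q where "q y = (f y - f x) / (x - y)" for y
  define N where "N = {y. e < \<bar>x - y\<bar> \<and> \<bar>x - y\<bar> < R}"
  define Z where "Z = {y. 0 < \<bar>x - y\<bar> \<and> \<bar>x - y\<bar> \<le> e}"
  have [measurable]: "N \<in> sets borel" "Z \<in> sets borel" unfolding N_def Z_def by measurable
  have split_far: "{y. e < \<bar>x - y\<bar>} = {y. R \<le> \<bar>x - y\<bar>} \<union> N" "{y. R \<le> \<bar>x - y\<bar>} \<inter> N = {}"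
    using e by (auto simp: N_def)
  have split_near: "{y. 0 < \<bar>x - y\<bar> \<and> \<bar>x - y\<bar> < R} = N \<union> Z" "N \<inter> Z = {}"
    using e by (auto simp: Z_def N_def)
  have N_sub: "N \<subseteq> {x - R..x + R}" "N \<subseteq> {y. \<bar>x - y\<bar> < R}"
    unfolding N_def by (auto simp: abs_diff_less_iff)
  have Z_sub: "Z \<subseteq> {x - e..x + e}" "Z \<subseteq> {y. \<bar>x - y\<bar> < R}"
    using e unfolding Z_def by (auto simp: abs_diff_le_iff)
  have qN: "set_integrable lborel N q"
    unfolding q_def[abs_def] using e by (intro difference_quotient_integral(1)[OF f_meas _ L lip N_sub(1) _ N_sub(2)]) auto
  have qZ: "set_integrable lborel Z q" "\<bar>LINT y:Z|lborel. q y\<bar> \<le> 2 * L * e"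
    unfolding q_def[abs_def] using e by (intro difference_quotient_integral[OF f_meas _ L lip Z_sub(1) _ Z_sub(2)]; simp)+
  have hN: "set_integrable lborel N (\<lambda>y. f y / (x - y))"
    "(LINT y:N|lborel. f y / (x - y)) = (LINT y:N|lborel. q y)"
    using pv_subtract_value[OF e(1) f_meas qN[unfolded N_def q_def[abs_def]]]
    unfolding N_def q_def[abs_def] by simp_all
  have "(LINT y:{y. e < \<bar>x - y\<bar>}|lborel. f y / (x - y)) = I_far + (LINT y:N|lborel. q y)"
    unfolding split_far(1) I_far_def using set_integral_Un[OF split_far(2) far_int hN(1)] hN(2) by simp
  moreover have "I_near = (LINT y:N|lborel. q y) + (LINT y:Z|lborel. q y)"
    unfolding I_near_def q_def[symmetric] split_near(1)
    using set_integral_Un[OF split_near(2) qN qZ(1)] by simp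
  ultimately show ?thesis using qZ(2) by simp
qed

lemma hilbert_pv_split:
  fixes f :: "real \<Rightarrow> real" and x R L :: real
  assumes f_meas[measurable]: "f \<in> borel_measurable borel" and R: "0 < R" and L: "0 \<le> L"
    and lip: "\<And>y. \<bar>x - y\<bar> < R \<Longrightarrow> \<bar>f y - f x\<bar> \<le> L * \<bar>x - y\<bar>"
    and far_int: "set_integrable lborel {y. R \<le> \<bar>x - y\<bar>} (\<lambda>y. f y / (x - y))"
  defines "I_far \<equiv> LINT y:{y. R \<le> \<bar>x - y\<bar>}|lborel. f y / (x - y)"
    and "I_near \<equiv> LINT y:{y. 0 < \<bar>x - y\<bar> \<and> \<bar>x - y\<bar> < R}|lborel. (f y - f x) / (x - y)"
  shows "hilbert f x = (I_far + I_near) / pi" "\<bar>I_near\<bar> \<le> 2 * L * R"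
proof -
  show "\<bar>I_near\<bar> \<le> 2 * L * R"
    unfolding I_near_def using R
    by (intro difference_quotient_integral(2)[OF f_meas _ L lip]) (auto simp: abs_diff_less_iff)
  have "((\<lambda>e. (LINT y:{y. e < \<bar>x - y\<bar>}|lborel. f y / (x - y)) - (I_far + I_near)) \<longlongrightarrow> 0) (at_right 0)"
  proof (rule Lim_null_comparison)
    show "\<forall>\<^sub>F e in at_right 0.
        norm ((LINT y:{y. e < \<bar>x - y\<bar>}|lborel. f y / (x - y)) - (I_far + I_near)) \<le> 2 * L * e"
      using R pv_truncation_error[OF f_meas L _ _ lip far_int] unfolding I_far_def I_near_def
      by (auto simp: eventually_at_right_field intro!: exI[of _ R])
    show "((\<lambda>e. 2 * L * e) \<longlongrightarrow> 0) (at_right 0)"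
      by (intro tendsto_eq_intros) auto
  qed
  then have "((\<lambda>e. LINT y:{y. e < \<bar>x - y\<bar>}|lborel. f y / (x - y)) \<longlongrightarrow> I_far + I_near) (at_right 0)"
    by (simp add: Lim_null[symmetric])
  then show "hilbert f x = (I_far + I_near) / pi"
    unfolding hilbert_def by (simp add: tendsto_Lim)
qed

(* The majorant for the far part of the Hilbert transform of a function decaying like B|y|^(-\<gamma>),
   when x has size c: it is B|y|^(-\<gamma>)/(c/2) for |y| \<le> 2c and B|y|^(-\<gamma>)/(|y|/2) beyond. *)
definition decay_majorant :: "real \<Rightarrow> real \<Rightarrow> real \<Rightarrow> real \<Rightarrow> real" where
  "decay_majorant B \<gamma> c y = 2 * B / c * (if \<bar>y\<bar> \<le> 2 * c then \<bar>y\<bar> powr (-\<gamma>) else 0)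
                  + 2 * B * (if 2 * c \<le> \<bar>y\<bar> then \<bar>y\<bar> powr (-1-\<gamma>) else 0)"

lemma decay_majorant_integral:
  fixes B \<gamma> c :: real
  assumes "0 < \<gamma>" "\<gamma> < 1" "0 < c"
  shows "integrable lborel (decay_majorant B \<gamma> c)"
    "integral\<^sup>L lborel (decay_majorant B \<gamma> c) = (8 * B / (1 - \<gamma>) + 4 * B / \<gamma>) * (2 * c) powr (-\<gamma>)"
proof -
  note near = lborel_integral_powr_near_0[of "2 * c" \<gamma>] and tail = lborel_integral_powr_tail[of "2 * c" \<gamma>]
  show "integrable lborel (decay_majorant B \<gamma> c)"
    unfolding decay_majorant_def[abs_def] using near tail assms by simp
  have "(2 * c) powr (1 - \<gamma>) = 2 * c * (2 * c) powr (-\<gamma>)"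
    using assms by (simp add: powr_diff powr_minus divide_inverse)
  then have "integral\<^sup>L lborel (decay_majorant B \<gamma> c)
      = 2 * B / c * (2 * (2 * c * (2 * c) powr (-\<gamma>) / (1 - \<gamma>))) + 2 * B * (2 * ((2 * c) powr (-\<gamma>) / \<gamma>))"
    unfolding decay_majorant_def[abs_def] using near tail assms by simp
  also have "\<dots> = (8 * B / (1 - \<gamma>) + 4 * B / \<gamma>) * (2 * c) powr (-\<gamma>)"
    using assms by (simp add: field_simps)
  finally show "integral\<^sup>L lborel (decay_majorant B \<gamma> c) = (8 * B / (1 - \<gamma>) + 4 * B / \<gamma>) * (2 * c) powr (-\<gamma>)" .
qed

lemma far_kernel_le_decay_majorant:
  fixes v x y B \<gamma> :: real
  assumes v: "\<bar>v\<bar> \<le> B * \<bar>y\<bar> powr (-\<gamma>)" and far: "\<bar>x\<bar> / 2 \<le> \<bar>x - y\<bar>"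
    and "y \<noteq> 0" "x \<noteq> 0" "0 \<le> B"
  shows "\<bar>v / (x - y)\<bar> \<le> decay_majorant B \<gamma> \<bar>x\<bar> y"
proof (cases "\<bar>y\<bar> \<le> 2 * \<bar>x\<bar>")
  case True
  have "\<bar>v / (x - y)\<bar> \<le> B * \<bar>y\<bar> powr (-\<gamma>) / (\<bar>x\<bar> / 2)"
    unfolding abs_divide using assms by (intro frac_le) auto
  also have "\<dots> = 2 * B / \<bar>x\<bar> * \<bar>y\<bar> powr (-\<gamma>)" by simp
  also have "\<dots> \<le> decay_majorant B \<gamma> \<bar>x\<bar> y"
    unfolding decay_majorant_def using True assms by (intro add_increasing2) auto
  finally show ?thesis .
next
  case False
  then have "\<bar>y\<bar> / 2 \<le> \<bar>x - y\<bar>" by linarith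
  then have "\<bar>v / (x - y)\<bar> \<le> B * \<bar>y\<bar> powr (-\<gamma>) / (\<bar>y\<bar> / 2)"
    unfolding abs_divide using assms by (intro frac_le) auto
  also have "\<dots> = 2 * B * \<bar>y\<bar> powr (-1-\<gamma>)"
    using assms by (simp add: powr_diff powr_minus field_simps)
  finally show ?thesis using False assms by (simp add: decay_majorant_def)
qed

lemma hilbert_far_part:
  fixes f :: "real \<Rightarrow> real" and B \<gamma> x :: real
  assumes \<gamma>: "0 < \<gamma>" "\<gamma> < 1" and B: "0 \<le> B" and [measurable]: "f \<in> borel_measurable borel"
    and decay: "\<And>y. y \<noteq> 0 \<Longrightarrow> \<bar>f y\<bar> \<le> B * \<bar>y\<bar> powr (-\<gamma>)" and x: "x \<noteq> 0"
  shows "set_integrable lborel {y. \<bar>x\<bar> / 2 \<le> \<bar>x - y\<bar>} (\<lambda>y. f y / (x - y))"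
    "\<bar>LINT y:{y. \<bar>x\<bar> / 2 \<le> \<bar>x - y\<bar>}|lborel. f y / (x - y)\<bar> \<le> (8 * B / (1 - \<gamma>) + 4 * B / \<gamma>) * \<bar>x\<bar> powr (-\<gamma>)"
proof -
  have "0 < \<bar>x\<bar>" using x by simp
  note majorant = decay_majorant_integral[OF \<gamma> this, where B = B]
  have "0 \<le> decay_majorant B \<gamma> \<bar>x\<bar> y" for y using B x by (simp add: decay_majorant_def)
  moreover have "AE y in lborel. y \<in> {y. \<bar>x\<bar> / 2 \<le> \<bar>x - y\<bar>} \<longrightarrow> \<bar>f y / (x - y)\<bar> \<le> decay_majorant B \<gamma> \<bar>x\<bar> y"
    using AE_lborel_singleton[of 0]
  proof eventually_elim
    case (elim y)
    then show ?case using far_kernel_le_decay_majorant[OF decay _ _ x B] by simp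
  qed
  ultimately have far: "set_integrable lborel {y. \<bar>x\<bar> / 2 \<le> \<bar>x - y\<bar>} (\<lambda>y. f y / (x - y))"
    "\<bar>LINT y:{y. \<bar>x\<bar> / 2 \<le> \<bar>x - y\<bar>}|lborel. f y / (x - y)\<bar> \<le> integral\<^sup>L lborel (decay_majorant B \<gamma> \<bar>x\<bar>)"
    using set_integral_abs_le_majorant[OF _ _ majorant(1)] x by auto
  then show "set_integrable lborel {y. \<bar>x\<bar> / 2 \<le> \<bar>x - y\<bar>} (\<lambda>y. f y / (x - y))" by blast
  have "integral\<^sup>L lborel (decay_majorant B \<gamma> \<bar>x\<bar>) \<le> (8 * B / (1 - \<gamma>) + 4 * B / \<gamma>) * \<bar>x\<bar> powr (-\<gamma>)"
    unfolding majorant(2) using x \<gamma> B by (intro mult_left_mono powr_mono2') auto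
  with far(2) show "\<bar>LINT y:{y. \<bar>x\<bar> / 2 \<le> \<bar>x - y\<bar>}|lborel. f y / (x - y)\<bar> \<le> (8 * B / (1 - \<gamma>) + 4 * B / \<gamma>) * \<bar>x\<bar> powr (-\<gamma>)"
    by linarith
qed

lemma lipschitz_near_point:
  fixes f f' :: "real \<Rightarrow> real" and B' \<gamma> x y :: real
  assumes \<gamma>: "0 \<le> \<gamma>" and B': "0 \<le> B'"
    and deriv: "\<And>t. 1 \<le> \<bar>t\<bar> \<Longrightarrow> (f has_real_derivative f' t) (at t)"
    and deriv_decay: "\<And>t. 1 \<le> \<bar>t\<bar> \<Longrightarrow> \<bar>f' t\<bar> \<le> B' * \<bar>t\<bar> powr (-1-\<gamma>)"
    and x: "2 \<le> \<bar>x\<bar>" and y: "\<bar>x - y\<bar> < \<bar>x\<bar> / 2"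
  shows "\<bar>f y - f x\<bar> \<le> B' * (\<bar>x\<bar> / 2) powr (-1-\<gamma>) * \<bar>x - y\<bar>"
proof -
  have far_from_0: "\<bar>x\<bar> / 2 \<le> \<bar>t\<bar>" if t: "t \<in> {min x y..max x y}" for t
  proof -
    have "\<bar>x - t\<bar> \<le> \<bar>x - y\<bar>" using t by (cases "x \<le> y") (auto simp: min_def max_def)
    moreover have "\<bar>x\<bar> \<le> \<bar>x - t\<bar> + \<bar>t\<bar>" using abs_triangle_ineq[of "x - t" t] by simp
    ultimately show ?thesis using y by linarith
  qed
  have "norm (f y - f x) \<le> B' * (\<bar>x\<bar> / 2) powr (-1-\<gamma>) * norm (y - x)"
  proof (rule field_differentiable_bound[of "{min x y..max x y}"])
    fix t assume t: "t \<in> {min x y..max x y}"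
    have t_ge_1: "1 \<le> \<bar>t\<bar>" using far_from_0[OF t] x by linarith
    show "(f has_field_derivative f' t) (at t within {min x y..max x y})"
      using deriv[OF t_ge_1] by (rule has_field_derivative_at_within)
    have "\<bar>f' t\<bar> \<le> B' * \<bar>t\<bar> powr (-1-\<gamma>)" by (rule deriv_decay[OF t_ge_1])
    also have "\<dots> \<le> B' * (\<bar>x\<bar> / 2) powr (-1-\<gamma>)"
      using far_from_0[OF t] x \<gamma> B' by (intro mult_left_mono powr_mono2') simp_all
    finally show "norm (f' t) \<le> B' * (\<bar>x\<bar> / 2) powr (-1-\<gamma>)" by simp
  qed (simp_all add: convex_real_interval)
  then show ?thesis by (simp add: abs_minus_commute)
qed

(* If |f(y)| \<le> B|y|^(-\<gamma>) and |f'(y)| \<le> B'|y|^(-1-\<gamma>) for |y| \<ge> 1,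
   with 0 < \<gamma> < 1, then |Hf(x)| \<le> C(\<gamma>)(B+B')|x|^(-\<gamma>) for |x| \<ge> 4: split the principal value at
   radius R = |x|/2, where f is Lipschitz with constant L = B'R^(-1-\<gamma>), so that the near part is at most
   2LR \<le> 4B'|x|^(-\<gamma>). *)
theorem hilbert_transform_decay:
  fixes f f' :: "real \<Rightarrow> real" and B B' \<gamma> x :: real
  assumes \<gamma>: "0 < \<gamma>" "\<gamma> < 1" and B: "0 \<le> B" "0 \<le> B'"
    and f_meas: "f \<in> borel_measurable borel"
    and decay: "\<And>y. y \<noteq> 0 \<Longrightarrow> \<bar>f y\<bar> \<le> B * \<bar>y\<bar> powr (-\<gamma>)"
    and deriv: "\<And>y. 1 \<le> \<bar>y\<bar> \<Longrightarrow> (f has_real_derivative f' y) (at y)"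
    and deriv_decay: "\<And>y. 1 \<le> \<bar>y\<bar> \<Longrightarrow> \<bar>f' y\<bar> \<le> B' * \<bar>y\<bar> powr (-1-\<gamma>)"
    and x: "4 \<le> \<bar>x\<bar>"
  shows "\<bar>hilbert f x\<bar> \<le> (8 * B / (1 - \<gamma>) + 4 * B / \<gamma> + 4 * B') * \<bar>x\<bar> powr (-\<gamma>)"
proof -
  define R where "R = \<bar>x\<bar> / 2"
  define L where "L = B' * R powr (-1-\<gamma>)"
  have R: "0 < R" and L: "0 \<le> L" using x B by (auto simp: R_def L_def)
  have lip: "\<bar>f y - f x\<bar> \<le> L * \<bar>x - y\<bar>" if "\<bar>x - y\<bar> < R" for y
    using lipschitz_near_point[OF _ B(2) deriv deriv_decay] \<gamma> x that unfolding L_def R_def by simp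
  define I_far where "I_far = (LINT y:{y. R \<le> \<bar>x - y\<bar>}|lborel. f y / (x - y))"
  define I_near where "I_near = (LINT y:{y. 0 < \<bar>x - y\<bar> \<and> \<bar>x - y\<bar> < R}|lborel. (f y - f x) / (x - y))"
  have far: "set_integrable lborel {y. R \<le> \<bar>x - y\<bar>} (\<lambda>y. f y / (x - y))"
    "\<bar>I_far\<bar> \<le> (8 * B / (1 - \<gamma>) + 4 * B / \<gamma>) * \<bar>x\<bar> powr (-\<gamma>)"
    using hilbert_far_part[OF \<gamma> B(1) f_meas decay, of x, folded R_def] x unfolding I_far_def by auto
  have split: "hilbert f x = (I_far + I_near) / pi" "\<bar>I_near\<bar> \<le> 2 * L * R"
    using hilbert_pv_split[OF f_meas R L lip far(1)] unfolding I_far_def I_near_def by auto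
  have "R powr (-1-\<gamma>) * R = R powr (-\<gamma>)"
    using powr_add[of R "-1-\<gamma>" 1] R by simp
  then have "2 * L * R = 2 * B' * R powr (-\<gamma>)"
    unfolding L_def by (simp add: mult.assoc)
  also have "\<dots> \<le> 4 * B' * \<bar>x\<bar> powr (-\<gamma>)"
  proof -
    have "R powr (-\<gamma>) = 2 powr \<gamma> * \<bar>x\<bar> powr (-\<gamma>)"
      unfolding R_def by (simp add: powr_divide powr_minus field_simps)
    also have "\<dots> \<le> 2 * \<bar>x\<bar> powr (-\<gamma>)" using powr_mono[of \<gamma> 1 2] \<gamma> by (intro mult_right_mono) auto
    finally show ?thesis using mult_left_mono[of _ _ "2 * B'"] B by force
  qed
  finally have near: "\<bar>I_near\<bar> \<le> 4 * B' * \<bar>x\<bar> powr (-\<gamma>)"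
    using split(2) by linarith
  have "\<bar>hilbert f x\<bar> = \<bar>I_far + I_near\<bar> / pi"
    unfolding split(1) by (simp add: abs_divide)
  also have "\<dots> \<le> \<bar>I_far + I_near\<bar>"
    using mult_left_mono[of 1 pi "\<bar>I_far + I_near\<bar>"] pi_gt3 by (simp add: divide_le_eq)
  also have "\<dots> \<le> (8 * B / (1 - \<gamma>) + 4 * B / \<gamma>) * \<bar>x\<bar> powr (-\<gamma>) + 4 * B' * \<bar>x\<bar> powr (-\<gamma>)"
    using far(2) near by linarith
  finally show ?thesis by (simp add: distrib_right)
qed

lemma sq1_pos[simp]: "0 < (x::real)\<^sup>2 + 1" by (smt (verit) zero_le_power2)
lemma sq1_ne[simp]: "(x::real)\<^sup>2 + 1 \<noteq> 0" by (smt (verit) zero_le_power2)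

(* The constants of Lemma 5.4; they depend only on \<mu>, \<nu> (and M).  deriv_const bounds F' in units of
   e^(4|g|) w(x), bound_const is the constant c(\<mu>,\<nu>) of part (1), and hilbert_const is the
   constant c(\<mu>,\<nu>,M) of part (2), obtained from hilbert_transform_decay with the exponent
   decay_exponent. *)
definition deriv_const :: "real \<Rightarrow> real \<Rightarrow> real" where
  "deriv_const \<mu> \<nu> = 4 * 5 powr (\<mu> - \<nu>) * (\<mu> - \<nu>) * pi * \<mu> / \<nu>"

definition bound_const :: "real \<Rightarrow> real \<Rightarrow> real" where
  "bound_const \<mu> \<nu> = deriv_const \<mu> \<nu> * (1 + 1 / (2 * \<mu> - 1))"

definition decay_exponent :: "real \<Rightarrow> real" where
  "decay_exponent \<mu> = min (\<mu> - 1/2) (1/2)"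

definition f_decay_const :: "real \<Rightarrow> real \<Rightarrow> real \<Rightarrow> real" where
  "f_decay_const \<mu> \<nu> M = bound_const \<mu> \<nu> * exp (4 * M) + (\<mu> - \<nu>) + 2 * (\<mu> - \<nu>) * pi"

definition deriv_decay_const :: "real \<Rightarrow> real \<Rightarrow> real \<Rightarrow> real" where
  "deriv_decay_const \<mu> \<nu> M = deriv_const \<mu> \<nu> * exp (4 * M) + (\<mu> - \<nu>)"

definition hilbert_const :: "real \<Rightarrow> real \<Rightarrow> real \<Rightarrow> real" where
  "hilbert_const \<mu> \<nu> M = 8 * f_decay_const \<mu> \<nu> M / (1 - decay_exponent \<mu>)
     + 4 * f_decay_const \<mu> \<nu> M / decay_exponent \<mu> + 4 * deriv_decay_const \<mu> \<nu> M"

locale admissible_data =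
  fixes \<mu> \<nu> :: real and g hinv :: "real \<Rightarrow> real" and \<kappa> :: real and F :: "real \<Rightarrow> real"
  assumes \<mu>_gt: "\<mu> > 1/2" and \<nu>_pos: "0 < \<nu>" and \<nu>_lt: "\<nu> < 1/2"
    and g_in_X: "g \<in> Xspace" and adm: "admissible \<mu> \<nu> g hinv \<kappa> F"
begin

definition a :: real where "a = \<mu> - \<nu>"
definition E :: real where "E = exp (supnorm g)"
definition D :: "real \<Rightarrow> real" where "D x = \<kappa> / (x * hinv x * hdens \<mu> \<nu> g x)"
definition dens0 :: "real \<Rightarrow> real" where "dens0 x = \<bar>x\<bar> powr (\<nu> - 1) * (x\<^sup>2 + 1) powr (a/2)"
definition P :: "real \<Rightarrow> real" where "P x = \<bar>x\<bar> powr \<nu> * (x\<^sup>2 + 1) powr (a/2)"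
definition P_factor :: "real \<Rightarrow> real" where "P_factor x = \<nu> + a * x\<^sup>2 / (x\<^sup>2 + 1)"

lemma a_pos: "a > 0" using \<mu>_gt \<nu>_lt by (simp add: a_def)
lemma E_pos: "E > 0" by (simp add: E_def)
lemma deriv_const_pos: "deriv_const \<mu> \<nu> > 0"
  using \<mu>_gt \<nu>_pos \<nu>_lt by (simp add: deriv_const_def)

lemma hinv_cont: "continuous_on UNIV hinv" and hinv0: "hinv 0 = 0"
  and hinv_deriv: "x \<noteq> 0 \<Longrightarrow> (hinv has_real_derivative hdens \<mu> \<nu> g x) (at x)"
  and kappa_pos: "\<kappa> > 0"
  and D_int: "integrable lborel D" and D_integral: "integral\<^sup>L lborel D = a * pi"
  and F_cont: "continuous_on UNIV F"
  and F_deriv: "x \<noteq> 0 \<Longrightarrow> (F has_real_derivative D x) (at x)"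
  and F_top: "(F \<longlongrightarrow> 0) at_top"
  using adm unfolding admissible_def D_def[abs_def] a_def by auto

lemma exp_g_bounds: "exp (g x) \<le> E" "1/E \<le> exp (g x)"
proof -
  have h: "\<bar>g x\<bar> \<le> supnorm g" by (rule abs_le_supnorm[OF g_in_X])
  show "exp (g x) \<le> E" using h by (simp add: E_def)
  have "exp (- supnorm g) \<le> exp (g x)" using h by simp
  then show "1/E \<le> exp (g x)" by (simp add: E_def exp_minus inverse_eq_divide)
qed

lemma hdens_eq: "hdens \<mu> \<nu> g x = dens0 x * exp (g x)"
  by (simp add: hdens_def dens0_def a_def)

lemma dens0_pos: "x \<noteq> 0 \<Longrightarrow> dens0 x > 0" by (simp add: dens0_def)

lemma hdens_bounds: "x \<noteq> 0 \<Longrightarrow> dens0 x / E \<le> hdens \<mu> \<nu> g x \<and> hdens \<mu> \<nu> g x \<le> E * dens0 x"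
  using exp_g_bounds[of x] dens0_pos[of x] E_pos
  by (auto simp: hdens_eq field_simps intro: mult_left_mono)

lemma P_deriv:
  assumes "s > 0"
  shows "(P has_real_derivative dens0 s * P_factor s) (at s)"
proof -
  have eq: "\<forall>\<^sub>F t in nhds s. P t = t powr \<nu> * (t\<^sup>2 + 1) powr (a/2)"
    using eventually_nhds_in_open[of "{0<..}" s] assms
    by (auto elim!: eventually_mono simp: P_def)
  have "((\<lambda>t. t powr \<nu> * (t\<^sup>2 + 1) powr (a/2)) has_real_derivative
     \<nu> * s powr (\<nu> - 1) * (s\<^sup>2 + 1) powr (a/2) + s powr \<nu> * ((a/2) * (s\<^sup>2+1) powr (a/2 - 1) * (2 * s))) (at s)"
    using assms by (auto intro!: derivative_eq_intros simp del: sq1_pos) (simp add: sq1_pos)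
  moreover have "\<nu> * s powr (\<nu> - 1) * (s\<^sup>2 + 1) powr (a/2) + s powr \<nu> * ((a/2) * (s\<^sup>2+1) powr (a/2 - 1) * (2 * s))
     = dens0 s * P_factor s"
  proof -
    have s_powr: "s powr \<nu> = s powr (\<nu> - 1) * s" using assms by (simp add: powr_diff)
    have sq_powr: "(s\<^sup>2+1) powr (a/2 - 1) = (s\<^sup>2+1) powr (a/2) / (s\<^sup>2+1)"
      by (simp add: powr_diff)
    have nonzero: "1 + s * s \<noteq> 0" "2 + s * (s * 2) \<noteq> 0" using assms by (smt (verit) mult_pos_pos)+
    show ?thesis unfolding s_powr sq_powr dens0_def P_factor_def using assms nonzero
      by (simp add: field_simps power2_eq_square)
  qed
  ultimately show ?thesis
    using DERIV_cong_ev[OF refl eq refl] by simp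
qed

lemma P_cont: "continuous_on UNIV P"
  unfolding P_def[abs_def] using \<nu>_pos a_pos
  by (intro continuous_intros continuous_on_powr') auto

lemma P0: "P 0 = 0" by (simp add: P_def)
lemma P_minus: "P (-x) = P x" by (simp add: P_def)
lemma P_pos: "x \<noteq> 0 \<Longrightarrow> P x > 0" by (simp add: P_def)

lemma P_deriv_neg:
  assumes "s < 0"
  shows "(P has_real_derivative - (dens0 s * P_factor s)) (at s)"
proof -
  have "((\<lambda>t. P (-t)) has_real_derivative (dens0 (-s) * P_factor (-s)) * (-1)) (at s)"
    using assms by (intro DERIV_chain2[OF P_deriv]) (auto intro!: derivative_eq_intros)
  then show ?thesis by (simp add: P_minus dens0_def P_factor_def)
qed

lemma factor_bounds: "\<nu> \<le> P_factor s \<and> P_factor s \<le> \<mu>"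
proof -
  have "s\<^sup>2/(s\<^sup>2+1) \<le> 1" "0 \<le> s\<^sup>2/(s\<^sup>2+1)" by auto
  then show ?thesis using a_pos mult_left_mono[of "s\<^sup>2/(s\<^sup>2+1)" 1 a] by (auto simp: a_def P_factor_def)
qed

(* As \<nu> \<le> P_factor \<le> \<mu>, the slope of P/(\<mu>E) lies below hdens and that of EP/\<nu> above it. *)
lemma P_slope_le_hdens: assumes "x \<noteq> 0" shows "dens0 x * P_factor x / (\<mu> * E) \<le> hdens \<mu> \<nu> g x"
proof -
  have "dens0 x * P_factor x / (\<mu> * E) \<le> dens0 x * \<mu> / (\<mu> * E)"
    using factor_bounds[of x] dens0_pos[OF assms] \<mu>_gt E_pos by (intro divide_right_mono mult_left_mono) auto
  also have "\<dots> = dens0 x / E" using \<mu>_gt by simp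
  also have "\<dots> \<le> hdens \<mu> \<nu> g x" using hdens_bounds[OF assms] by auto
  finally show ?thesis .
qed

lemma hdens_le_P_slope: assumes "x \<noteq> 0" shows "hdens \<mu> \<nu> g x \<le> E * (dens0 x * P_factor x) / \<nu>"
proof -
  have "hdens \<mu> \<nu> g x \<le> E * dens0 x" using hdens_bounds[OF assms] by auto
  also have "\<dots> = E * (dens0 x * \<nu>) / \<nu>" using \<nu>_pos by simp
  also have "\<dots> \<le> E * (dens0 x * P_factor x) / \<nu>"
    using factor_bounds[of x] dens0_pos[OF assms] \<nu>_pos E_pos by (intro divide_right_mono mult_left_mono) auto
  finally show ?thesis .
qed

(* Integrating these slope comparisons from 0 traps hinv between multiples of \<plusminus>P. *)
lemma hinv_lower_pos:
  assumes "s > 0" shows "P s / (\<mu> * E) \<le> hinv s"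
proof -
  have "P s / (\<mu> * E) - P 0 / (\<mu> * E) \<le> hinv s - hinv 0"
  proof (rule increment_le_from_deriv[where u'="\<lambda>t. dens0 t * P_factor t / (\<mu> * E)" and v'="\<lambda>t. hdens \<mu> \<nu> g t"])
    show "continuous_on {0..s} (\<lambda>t. P t / (\<mu> * E))"
      using \<mu>_gt \<nu>_pos E_pos by (intro continuous_intros continuous_on_subset[OF P_cont]) auto
    show "continuous_on {0..s} hinv" by (rule continuous_on_subset[OF hinv_cont]) auto
    fix x assume x: "0 < x" "x < s"
    show "((\<lambda>t. P t / (\<mu> * E)) has_real_derivative dens0 x * P_factor x / (\<mu> * E)) (at x)"
      using x \<mu>_gt \<nu>_pos E_pos by (auto intro!: derivative_eq_intros P_deriv)
    show "(hinv has_real_derivative hdens \<mu> \<nu> g x) (at x)" using x by (intro hinv_deriv) auto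
    show "dens0 x * P_factor x / (\<mu> * E) \<le> hdens \<mu> \<nu> g x" using x by (intro P_slope_le_hdens) auto
  qed (use assms in auto)
  then show ?thesis by (simp add: P0 hinv0)
qed

lemma hinv_upper_pos:
  assumes "s > 0" shows "hinv s \<le> E * P s / \<nu>"
proof -
  have "hinv s - hinv 0 \<le> E * P s / \<nu> - E * P 0 / \<nu>"
  proof (rule increment_le_from_deriv[where v'="\<lambda>t. E * (dens0 t * P_factor t) / \<nu>" and u'="\<lambda>t. hdens \<mu> \<nu> g t"])
    show "continuous_on {0..s} (\<lambda>t. E * P t / \<nu>)"
      using \<mu>_gt \<nu>_pos E_pos by (intro continuous_intros continuous_on_subset[OF P_cont]) auto
    show "continuous_on {0..s} hinv" by (rule continuous_on_subset[OF hinv_cont]) auto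
    fix x assume x: "0 < x" "x < s"
    show "((\<lambda>t. E * P t / \<nu>) has_real_derivative E * (dens0 x * P_factor x) / \<nu>) (at x)"
      using x \<mu>_gt \<nu>_pos E_pos by (auto intro!: derivative_eq_intros P_deriv)
    show "(hinv has_real_derivative hdens \<mu> \<nu> g x) (at x)" using x by (intro hinv_deriv) auto
    show "hdens \<mu> \<nu> g x \<le> E * (dens0 x * P_factor x) / \<nu>" using x by (intro hdens_le_P_slope) auto
  qed (use assms in auto)
  then show ?thesis by (simp add: P0 hinv0)
qed

lemma hinv_upper_neg:
  assumes "s < 0" shows "hinv s \<le> - P s / (\<mu> * E)"
proof -
  have "(- P 0 / (\<mu> * E)) - (- P s / (\<mu> * E)) \<le> hinv 0 - hinv s"
  proof (rule increment_le_from_deriv[where u'="\<lambda>t. dens0 t * P_factor t / (\<mu> * E)" and v'="\<lambda>t. hdens \<mu> \<nu> g t"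
        and u = "\<lambda>t. - P t / (\<mu> * E)"])
    show "continuous_on {s..0} (\<lambda>t. - P t / (\<mu> * E))"
      using \<mu>_gt \<nu>_pos E_pos by (intro continuous_intros continuous_on_subset[OF P_cont]) auto
    show "continuous_on {s..0} hinv" by (rule continuous_on_subset[OF hinv_cont]) auto
    fix x assume x: "s < x" "x < 0"
    show "((\<lambda>t. - P t / (\<mu> * E)) has_real_derivative dens0 x * P_factor x / (\<mu> * E)) (at x)"
      using x \<mu>_gt \<nu>_pos E_pos by (auto intro!: derivative_eq_intros P_deriv_neg)
    show "(hinv has_real_derivative hdens \<mu> \<nu> g x) (at x)" using x by (intro hinv_deriv) auto
    show "dens0 x * P_factor x / (\<mu> * E) \<le> hdens \<mu> \<nu> g x" using x by (intro P_slope_le_hdens) auto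
  qed (use assms in auto)
  then show ?thesis by (simp add: P0 hinv0)
qed

lemma s_hinv_lower: assumes "s \<noteq> 0" shows "\<bar>s\<bar> * P s / (\<mu> * E) \<le> s * hinv s"
proof (cases "s > 0")
  case True
  then show ?thesis using hinv_lower_pos[OF True] mult_left_mono[of "P s / (\<mu> * E)" "hinv s" s]
    by (simp add: algebra_simps)
next
  case False
  then have s: "s < 0" using assms by simp
  have "s * hinv s \<ge> s * (- P s / (\<mu> * E))"
    using hinv_upper_neg[OF s] s by (intro mult_left_mono_neg) auto
  then show ?thesis using s by (simp add: algebra_simps)
qed

lemma P_scaled_pos: "x \<noteq> 0 \<Longrightarrow> 0 < \<bar>x\<bar> * P x / (\<mu> * E)"
  using P_pos[of x] \<mu>_gt E_pos by (simp add: divide_pos_pos)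

lemma s_hinv_pos: "s \<noteq> 0 \<Longrightarrow> 0 < s * hinv s"
  using s_hinv_lower[of s] P_scaled_pos[of s] by linarith

lemma hdens_pos: "s \<noteq> 0 \<Longrightarrow> 0 < hdens \<mu> \<nu> g s"
proof -
  assume s: "s \<noteq> 0"
  have "0 < dens0 s / E" using dens0_pos[OF s] E_pos by simp
  then show ?thesis using hdens_bounds[OF s] by linarith
qed

lemma D_pos: "s \<noteq> 0 \<Longrightarrow> 0 < D s"
  using s_hinv_pos[of s] hdens_pos[of s] kappa_pos by (simp add: D_def)

lemma D_nonneg: "0 \<le> D s"
  using D_pos[of s] by (cases "s = 0") (auto simp: D_def)

lemma s_hinv_hdens_lower:
  assumes s: "s \<noteq> 0"
  shows "\<bar>s\<bar> powr (2 * \<nu>) * (s\<^sup>2 + 1) powr a / (\<mu> * E\<^sup>2) \<le> s * hinv s * hdens \<mu> \<nu> g s"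
proof -
  have "\<bar>s\<bar> * P s * dens0 s = (\<bar>s\<bar> powr 1 * \<bar>s\<bar> powr \<nu> * \<bar>s\<bar> powr (\<nu> - 1)) * ((s\<^sup>2 + 1) powr (a/2) * (s\<^sup>2 + 1) powr (a/2))"
    using s by (simp add: P_def dens0_def algebra_simps)
  also have "\<dots> = \<bar>s\<bar> powr (1 + \<nu> + (\<nu> - 1)) * (s\<^sup>2 + 1) powr (a/2 + a/2)"
    by (simp only: powr_add)
  finally have prod: "\<bar>s\<bar> * P s * dens0 s = \<bar>s\<bar> powr (2 * \<nu>) * (s\<^sup>2 + 1) powr a"
    by (simp add: mult_2[symmetric])
  have "\<bar>s\<bar> powr (2 * \<nu>) * (s\<^sup>2 + 1) powr a / (\<mu> * E\<^sup>2) = (\<bar>s\<bar> * P s / (\<mu> * E)) * (dens0 s / E)"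
    using prod E_pos \<mu>_gt by (simp add: field_simps power2_eq_square)
  also have "\<dots> \<le> s * hinv s * hdens \<mu> \<nu> g s"
    using s_hinv_lower[OF s] hdens_bounds[OF s] P_scaled_pos[OF s] dens0_pos[OF s] E_pos
    by (intro mult_mono) auto
  finally show ?thesis .
qed

(* On [1,2] the integrand D is at least \<kappa>/Q; since \<integral>D = a\<pi>, this bounds \<kappa> by Q a \<pi>. *)
definition Q :: real where "Q = 4 * E\<^sup>2 * 5 powr a / \<nu>"

lemma Q_pos: "Q > 0" using E_pos \<nu>_pos by (simp add: Q_def)

lemma P_dens0_on_1_2:
  assumes "1 \<le> s" "s \<le> 2" shows "P s \<le> 2 * 5 powr (a/2)" "dens0 s \<le> 5 powr (a/2)"
proof -
  have s_powr: "s powr \<nu> \<le> 2" "s powr (\<nu> - 1) \<le> 1"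
    using powr_mono[of \<nu> 1 s] powr_mono[of "\<nu> - 1" 0 s] assms \<nu>_lt by auto
  have "s\<^sup>2 \<le> 2\<^sup>2" using assms by (intro power_mono) auto
  then have sq_powr: "(s\<^sup>2+1) powr (a/2) \<le> 5 powr (a/2)"
    using a_pos by (intro powr_mono2) auto
  show "P s \<le> 2 * 5 powr (a/2)" "dens0 s \<le> 5 powr (a/2)"
    unfolding P_def dens0_def using assms mult_mono[OF s_powr(1) sq_powr] mult_mono[OF s_powr(2) sq_powr] by auto
qed

lemma D_lower_on_1_2: assumes "1 \<le> s" "s \<le> 2" shows "\<kappa> / Q \<le> D s"
proof -
  have s0: "s > 0" "s \<noteq> 0" using assms by auto
  note P_dens0 = P_dens0_on_1_2[OF assms]
  have "0 < P s / (\<mu> * E)" using P_pos[OF s0(2)] \<mu>_gt E_pos by simp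
  then have hinv_nonneg: "0 \<le> hinv s" using hinv_lower_pos[OF s0(1)] by linarith
  have "s * hinv s * hdens \<mu> \<nu> g s \<le> 2 * (E * P s / \<nu>) * (E * dens0 s)"
    using hinv_upper_pos[OF s0(1)] hdens_bounds[OF s0(2)] hinv_nonneg hdens_pos[OF s0(2)]
      P_pos[OF s0(2)] \<nu>_pos E_pos assms(2)
    by (intro mult_mono) auto
  also have "\<dots> \<le> 2 * (E * (2 * 5 powr (a/2)) / \<nu>) * (E * 5 powr (a/2))"
    using P_dens0 E_pos \<nu>_pos P_pos[of s] dens0_pos[of s] s0
    by (intro mult_mono divide_right_mono mult_left_mono) auto
  also have "\<dots> = 4 * E\<^sup>2 * (5 powr (a/2) * 5 powr (a/2)) / \<nu>"
    by (simp add: power2_eq_square algebra_simps)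
  also have "5 powr (a/2) * 5 powr (a/2) = 5 powr a" by (simp add: powr_add[symmetric])
  finally have le: "s * hinv s * hdens \<mu> \<nu> g s \<le> Q" by (simp add: Q_def)
  have pos: "0 < s * hinv s * hdens \<mu> \<nu> g s"
    using s_hinv_pos[OF s0(2)] hdens_pos[OF s0(2)] by simp
  show ?thesis unfolding D_def using le pos kappa_pos Q_pos
    by (intro divide_left_mono) auto
qed

lemma kappa_bound: "\<kappa> \<le> Q * a * pi"
proof -
  have "integral\<^sup>L lborel (\<lambda>x. \<kappa> / Q * indicator {1..2::real} x) \<le> integral\<^sup>L lborel D"
  proof (rule integral_mono[OF _ D_int])
    show "integrable lborel (\<lambda>x. \<kappa> / Q * indicator {1..2::real} x :: real)"
      by (intro integrable_mult_right integrable_real_indicator) auto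
    fix x show "\<kappa> / Q * indicator {1..2::real} x \<le> D x"
      using D_lower_on_1_2[of x] D_nonneg[of x] by (auto split: split_indicator)
  qed
  also have "\<dots> = a * pi" by (rule D_integral)
  finally have "\<kappa> / Q \<le> a * pi" by simp
  then show ?thesis using Q_pos by (simp add: field_simps)
qed

definition w :: "real \<Rightarrow> real" where "w s = 1 / (\<bar>s\<bar> powr (2 * \<nu>) * (s\<^sup>2 + 1) powr a)"

lemma w_pos: "s \<noteq> 0 \<Longrightarrow> w s > 0" by (simp add: w_def)

lemma D_upper_bound: assumes s: "s \<noteq> 0" shows "D s \<le> deriv_const \<mu> \<nu> * E ^ 4 * w s"
proof -
  define d where "d = \<bar>s\<bar> powr (2 * \<nu>) * (s\<^sup>2 + 1) powr a"
  have "0 < d" using s by (simp add: d_def)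
  then have d_pos: "0 < d / (\<mu> * E\<^sup>2)" using \<mu>_gt E_pos by simp
  have "D s \<le> \<kappa> / (d / (\<mu> * E\<^sup>2))"
  proof -
    have denom_pos: "0 < s * hinv s * hdens \<mu> \<nu> g s" using s_hinv_pos[OF s] hdens_pos[OF s] by simp
    show ?thesis unfolding D_def
      by (rule divide_left_mono[OF s_hinv_hdens_lower[OF s, folded d_def]])
        (use mult_pos_pos[OF denom_pos d_pos] kappa_pos in simp_all)
  qed
  also have "\<dots> = \<kappa> * \<mu> * E\<^sup>2 / d" using \<mu>_gt E_pos \<open>0 < d\<close> by (simp add: field_simps)
  also have "\<dots> \<le> (Q * a * pi) * \<mu> * E\<^sup>2 / d"
    using kappa_bound \<mu>_gt E_pos \<open>0 < d\<close> by (intro divide_right_mono mult_right_mono) auto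
  also have "\<dots> = deriv_const \<mu> \<nu> * E ^ 4 * w s"
    unfolding Q_def deriv_const_def a_def[symmetric] w_def d_def
    by (simp add: field_simps power2_eq_square eval_nat_numeral)
  finally show ?thesis .
qed

lemma w_le: assumes "t \<noteq> 0" shows "w t \<le> \<bar>t\<bar> powr (-2 * \<mu>)"
proof -
  have "(t\<^sup>2) powr a = (\<bar>t\<bar> powr 2) powr a" by (simp add: powr_numeral)
  also have "\<dots> = \<bar>t\<bar> powr (2 * a)" by (simp only: powr_powr)
  finally have sq_powr: "(t\<^sup>2) powr a = \<bar>t\<bar> powr (2 * a)" .
  have "\<bar>t\<bar> powr (2 * a) \<le> (t\<^sup>2 + 1) powr a"
    unfolding sq_powr[symmetric] using a_pos by (intro powr_mono2) auto
  then have "\<bar>t\<bar> powr (2 * \<nu>) * \<bar>t\<bar> powr (2 * a) \<le> \<bar>t\<bar> powr (2 * \<nu>) * (t\<^sup>2 + 1) powr a"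
    by (intro mult_left_mono) auto
  moreover have "\<bar>t\<bar> powr (2 * \<nu>) * \<bar>t\<bar> powr (2 * a) = \<bar>t\<bar> powr (2 * \<mu>)"
    by (simp add: powr_add[symmetric] a_def algebra_simps)
  ultimately have "\<bar>t\<bar> powr (2 * \<mu>) \<le> \<bar>t\<bar> powr (2 * \<nu>) * (t\<^sup>2 + 1) powr a" by simp
  then have "1 / (\<bar>t\<bar> powr (2 * \<nu>) * (t\<^sup>2 + 1) powr a) \<le> 1 / \<bar>t\<bar> powr (2 * \<mu>)"
    using assms by (intro divide_left_mono) auto
  then show ?thesis by (simp add: w_def powr_minus divide_inverse)
qed

definition K :: real where "K = deriv_const \<mu> \<nu> * E ^ 4"
lemma K_pos: "K > 0" using deriv_const_pos E_pos by (simp add: K_def)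

lemma D_le_powr: "t \<noteq> 0 \<Longrightarrow> D t \<le> K * \<bar>t\<bar> powr (-2 * \<mu>)"
  using D_upper_bound[of t] w_le[of t] K_pos unfolding K_def
  by (smt (verit) mult_left_mono deriv_const_pos E_pos zero_less_power)

(* F is nondecreasing, with limit 0 at +\<infinity> and limit -a\<pi> at -\<infinity> (by dominated convergence of
   the integrals of D over [-t,t]); hence -a\<pi> \<le> F \<le> 0. *)
lemma F_mono_aux: assumes "s \<le> t" "\<not> (s < 0 \<and> 0 < t)" shows "F s \<le> F t"
proof (rule DERIV_nonneg_imp_increasing_open[OF assms(1)])
  fix x assume "s < x" "x < t"
  then have "x \<noteq> 0" using assms(2) by auto
  then show "\<exists>y. (F has_real_derivative y) (at x) \<and> 0 \<le> y"
    using F_deriv D_nonneg by blast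
qed (rule continuous_on_subset[OF F_cont], auto)

lemma F_mono: assumes "s \<le> t" shows "F s \<le> F t"
proof (cases "s < 0 \<and> 0 < t")
  case True
  then have "F s \<le> F 0" "F 0 \<le> F t" by (auto intro: F_mono_aux)
  then show ?thesis by simp
next
  case False then show ?thesis using F_mono_aux[OF assms] by blast
qed

lemma F_nonpos: "F s \<le> 0"
proof (rule tendsto_lowerbound[OF F_top])
  show "\<forall>\<^sub>F z in at_top. F s \<le> F z"
    using eventually_ge_at_top[of s] by eventually_elim (rule F_mono)
qed simp

lemma D_has_integral_ivl: assumes "s \<le> t" shows "(D has_integral (F t - F s)) {s..t}"
proof (rule fundamental_theorem_of_calculus_interior_strong[of "{0}"])
  fix x assume "x \<in> {s<..<t} - {0}"
  then show "(F has_vector_derivative D x) (at x)"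
    using F_deriv[of x] by (simp add: has_real_derivative_iff_has_vector_derivative)
qed (use assms continuous_on_subset[OF F_cont] in auto)

lemma F_at_bot: "(F \<longlongrightarrow> - (a * pi)) at_bot"
proof -
  have D_meas[measurable]: "D \<in> borel_measurable lborel" using D_int by blast
  have window: "(LINT y:{-t..t}|lborel. D y) = F t - F (-t)" if "0 \<le> t" for t
  proof -
    have "set_integrable lborel {-t..t} D"
      unfolding set_integrable_def by (rule integrable_mult_indicator[OF _ D_int]) simp
    then have "(LINT y:{-t..t}|lborel. D y) = integral {-t..t} D" by (rule set_borel_integral_eq_integral)
    also have "\<dots> = F t - F (-t)" using D_has_integral_ivl[of "-t" t] that by (simp add: integral_unique)
    finally show ?thesis .
  qed
  have "((\<lambda>t. LINT y:{-t..t}|lborel. D y) \<longlongrightarrow> integral\<^sup>L lborel D) at_top"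
    unfolding set_lebesgue_integral_def
  proof (rule integral_dominated_convergence_at_top[where w = D])
    show "AE y in lborel. ((\<lambda>t. indicator {-t..t} y *\<^sub>R D y) \<longlongrightarrow> D y) at_top"
    proof (rule AE_I2, rule tendsto_eventually)
      fix y :: real
      show "\<forall>\<^sub>F t in at_top. indicator {-t..t} y *\<^sub>R D y = D y"
        using eventually_ge_at_top[of "\<bar>y\<bar>"] by eventually_elim (auto simp: indicator_def)
    qed
    show "\<forall>\<^sub>F t in at_top. AE y in lborel. norm (indicator {-t..t} y *\<^sub>R D y) \<le> D y"
      using D_nonneg by (auto split: split_indicator)
  qed (use D_int in auto)
  then have "((\<lambda>t. F t - (LINT y:{-t..t}|lborel. D y)) \<longlongrightarrow> 0 - a * pi) at_top"
    using F_top D_integral by (intro tendsto_diff) auto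
  moreover have "\<forall>\<^sub>F t in at_top. F t - (LINT y:{-t..t}|lborel. D y) = F (-t)"
    using eventually_ge_at_top[of 0] by eventually_elim (simp add: window)
  ultimately have "((\<lambda>t. F (-t)) \<longlongrightarrow> - (a * pi)) at_top"
    by (auto intro: Lim_transform_eventually)
  then show ?thesis unfolding filterlim_at_bot_mirror .
qed

lemma F_lower_bound: "- (a * pi) \<le> F s"
proof (rule tendsto_upperbound[OF F_at_bot])
  show "\<forall>\<^sub>F z in at_bot. F z \<le> F s"
    using eventually_le_at_bot[of s] by eventually_elim (rule F_mono)
qed simp

(* Tail estimates: integrating D \<le> K|t|^(-2\<mu>) from the ends of the line gives
   |F(y)| \<le> K|y|^(1-2\<mu>)/(2\<mu>-1) at +\<infinity> and the same for F(y) + a\<pi> at -\<infinity>. *)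
lemma F_tail_pos: assumes y: "1 \<le> y" shows "- F y \<le> K * y powr (1 - 2 * \<mu>) / (2 * \<mu> - 1)"
proof -
  define G where "G t = - K * t powr (1 - 2 * \<mu>) / (2 * \<mu> - 1)" for t
  have b: "2 * \<mu> - 1 > 0" using \<mu>_gt by simp
  have G_deriv: "(G has_real_derivative K * t powr (-2 * \<mu>)) (at t)" if "0 < t" for t
  proof -
    have "(G has_real_derivative - K * ((1 - 2 * \<mu>) * t powr (1 - 2 * \<mu> - 1)) / (2 * \<mu> - 1)) (at t)"
      unfolding G_def[abs_def] using that b by (auto intro!: derivative_eq_intros)
    moreover have "- K * ((1 - 2 * \<mu>) * t powr (1 - 2 * \<mu> - 1)) / (2 * \<mu> - 1) = K * t powr (-2 * \<mu>)"
      using b by (simp add: field_simps)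
    ultimately show ?thesis by simp
  qed
  have "((\<lambda>t. t powr (1 - 2 * \<mu>)) \<longlongrightarrow> 0) at_top"
    using b by (intro tendsto_neg_powr filterlim_ident) auto
  then have G_top: "(G \<longlongrightarrow> 0) at_top"
    unfolding G_def using tendsto_mult_left[of _ 0 at_top "- K"] tendsto_divide_zero by fastforce
  have "0 - F y \<le> 0 - G y"
  proof (rule increment_le_at_top[OF _ _ F_deriv G_deriv _ F_top G_top])
    show "continuous_on {y..} F" by (rule continuous_on_subset[OF F_cont]) auto
    show "continuous_on {y..} G" unfolding G_def using y b by (intro continuous_intros) auto
    show "D t \<le> K * t powr (-2 * \<mu>)" if "y < t" for t using D_le_powr[of t] that y by simp
  qed (use y in auto)
  then show ?thesis by (simp add: G_def)
qed

lemma F_tail_neg: assumes y: "y \<le> -1" shows "F y + a * pi \<le> K * \<bar>y\<bar> powr (1 - 2 * \<mu>) / (2 * \<mu> - 1)"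
proof -
  define G where "G t = K * (- t) powr (1 - 2 * \<mu>) / (2 * \<mu> - 1)" for t
  have b: "2 * \<mu> - 1 > 0" using \<mu>_gt by simp
  have G_deriv: "(G has_real_derivative K * (-t) powr (-2 * \<mu>)) (at t)" if "t < 0" for t
  proof -
    have "(G has_real_derivative K * ((1 - 2 * \<mu>) * (- t) powr (1 - 2 * \<mu> - 1) * (-1)) / (2 * \<mu> - 1)) (at t)"
      unfolding G_def[abs_def] using that b by (auto intro!: derivative_eq_intros)
    moreover have "K * ((1 - 2 * \<mu>) * (- t) powr (1 - 2 * \<mu> - 1) * (-1)) / (2 * \<mu> - 1) = K * (-t) powr (-2 * \<mu>)"
      using b by (simp add: field_simps)
    ultimately show ?thesis by simp
  qed
  have "((\<lambda>t. (- t) powr (1 - 2 * \<mu>)) \<longlongrightarrow> 0) at_bot"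
    using b by (intro tendsto_neg_powr filterlim_uminus_at_top_at_bot) auto
  then have G_bot: "(G \<longlongrightarrow> 0) at_bot"
    unfolding G_def using tendsto_mult_left[of _ 0 at_bot K] tendsto_divide_zero by fastforce
  have "F y - - (a * pi) \<le> G y - 0"
  proof (rule increment_le_at_bot[OF _ _ F_deriv G_deriv _ F_at_bot G_bot])
    show "continuous_on {..y} F" by (rule continuous_on_subset[OF F_cont]) auto
    show "continuous_on {..y} G" unfolding G_def using y b by (intro continuous_intros) auto
    show "D t \<le> K * (-t) powr (-2 * \<mu>)" if "t < y" for t using D_le_powr[of t] that y by simp
  qed (use y in auto)
  then show ?thesis using y by (simp add: G_def)
qed

definition f :: "real \<Rightarrow> real" where "f y = F y - a * theta y"

lemma f_eq: "(\<lambda>y. F y - (\<mu> - \<nu>) * theta y) = f"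
  by (simp add: f_def a_def fun_eq_iff)

lemma E_pow_4: "E ^ 4 = exp (4 * supnorm g)"
  unfolding E_def by (simp add: exp_of_nat_mult[symmetric])

lemma K_le_bound_const: "K / (2 * \<mu> - 1) \<le> bound_const \<mu> \<nu> * exp (4 * supnorm g)" "K \<le> bound_const \<mu> \<nu> * exp (4 * supnorm g)"
proof -
  have "bound_const \<mu> \<nu> * exp (4 * supnorm g) = K + K / (2 * \<mu> - 1)"
    by (simp add: bound_const_def K_def E_pow_4 field_simps)
  moreover have "0 \<le> K" "0 \<le> K / (2 * \<mu> - 1)" using K_pos \<mu>_gt by auto
  ultimately show "K / (2 * \<mu> - 1) \<le> bound_const \<mu> \<nu> * exp (4 * supnorm g)" "K \<le> bound_const \<mu> \<nu> * exp (4 * supnorm g)"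
    by linarith+
qed

(* |f| \<le> 2a\<pi>, because both F and a theta take values in [-a\<pi>, 0]. *)
lemma f_bounded: "\<bar>f y\<bar> \<le> 2 * a * pi"
proof -
  have "- (a * pi) \<le> F y" "F y \<le> 0" by (rule F_lower_bound, rule F_nonpos)
  moreover have "- pi \<le> theta y" "theta y \<le> 0" using theta_range[of y] by auto
  moreover have "a * (- pi) \<le> a * theta y" "a * theta y \<le> 0"
    using calculation(3,4) a_pos by (intro mult_left_mono, simp_all add: mult_nonneg_nonpos)
  ultimately show ?thesis using a_pos pi_gt_zero unfolding f_def by (auto simp: abs_if)
qed

lemma f_bound_far: assumes y: "1 \<le> \<bar>y\<bar>"
  shows "\<bar>f y\<bar> \<le> K / (2 * \<mu> - 1) * \<bar>y\<bar> powr (1 - 2 * \<mu>) + a * \<bar>y\<bar> powr (-1)"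
proof -
  have K_comm: "K * \<bar>y\<bar> powr (1 - 2 * \<mu>) / (2 * \<mu> - 1) = K / (2 * \<mu> - 1) * \<bar>y\<bar> powr (1 - 2 * \<mu>)"
    by simp
  show ?thesis
  proof (cases "y \<ge> 1")
    case True
    have F_tail: "- F y \<le> K * \<bar>y\<bar> powr (1 - 2 * \<mu>) / (2 * \<mu> - 1)" using F_tail_pos[OF True] True by simp
    have F_sign: "F y \<le> 0" by (rule F_nonpos)
    have theta_term: "\<bar>a * theta y\<bar> \<le> a * \<bar>y\<bar> powr (-1)"
      using theta_at_pos_infinity[OF True] a_pos True
      by (simp add: abs_mult powr_minus divide_inverse mult_left_mono)
    have "\<bar>f y\<bar> \<le> \<bar>F y\<bar> + \<bar>a * theta y\<bar>" unfolding f_def by (rule abs_triangle_ineq4)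
    then show ?thesis using F_tail F_sign theta_term K_comm by linarith
  next
    case False
    then have yn: "y \<le> -1" using y by linarith
    have F_tail: "F y + a * pi \<le> K * \<bar>y\<bar> powr (1 - 2 * \<mu>) / (2 * \<mu> - 1)" by (rule F_tail_neg[OF yn])
    have F_sign: "0 \<le> F y + a * pi" using F_lower_bound[of y] by simp
    have theta_tail: "0 \<le> theta y + pi" "theta y + pi \<le> 1 / \<bar>y\<bar>" using theta_at_neg_infinity[OF yn] by auto
    have theta_term: "\<bar>a * (theta y + pi)\<bar> \<le> a * \<bar>y\<bar> powr (-1)"
    proof -
      have "a * (theta y + pi) \<le> a * (1 / \<bar>y\<bar>)" using theta_tail a_pos by (intro mult_left_mono) auto
      then show ?thesis using theta_tail a_pos yn by (simp add: abs_mult powr_minus divide_inverse)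
    qed
    have f_split: "f y = (F y + a * pi) - a * (theta y + pi)" unfolding f_def by (simp add: algebra_simps)
    have "\<bar>f y\<bar> \<le> \<bar>F y + a * pi\<bar> + \<bar>a * (theta y + pi)\<bar>" unfolding f_split by (rule abs_triangle_ineq4)
    then show ?thesis using F_tail F_sign theta_term K_comm by linarith
  qed
qed

(* f' = D - a/(y\<^sup>2+1), a difference of two nonnegative terms. *)
lemma f_deriv: assumes "y \<noteq> 0" shows "(f has_real_derivative D y - a * (1 / (y\<^sup>2 + 1))) (at y)"
  unfolding f_def[abs_def] using assms by (auto intro!: derivative_eq_intros F_deriv theta_deriv)

lemma f_deriv_bound: assumes "y \<noteq> 0" shows "\<bar>D y - a * (1 / (y\<^sup>2 + 1))\<bar> \<le> K * w y + a * (1 / (y\<^sup>2 + 1))"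
proof -
  have "0 \<le> D y" "D y \<le> K * w y" using D_nonneg D_upper_bound[OF assms] by (auto simp: K_def)
  moreover have "0 \<le> a * (1 / (y\<^sup>2 + 1))" using a_pos by simp
  ultimately show ?thesis by linarith
qed

lemma deviation_bounds:
  "let f = (\<lambda>x. F x - (\<mu> - \<nu>) * theta x) in
     (\<forall>x. \<bar>x\<bar> \<ge> 1 \<longrightarrow> \<bar>f x\<bar> \<le> bound_const \<mu> \<nu> * exp (4 * supnorm g) * \<bar>x\<bar> powr (1 - 2 * \<mu>) + (\<mu> - \<nu>) * \<bar>x\<bar> powr (-1)) \<and>
     (\<forall>x. \<bar>f x\<bar> \<le> 2 * (\<mu> - \<nu>) * pi) \<and>
     (\<forall>x. x \<noteq> 0 \<longrightarrow> \<bar>deriv f x\<bar> \<le> bound_const \<mu> \<nu> * exp (4 * supnorm g) *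
        (1 / (\<bar>x\<bar> powr (2 * \<nu>) * (x\<^sup>2 + 1) powr (\<mu> - \<nu>))) + (\<mu> - \<nu>) * (1 / (x\<^sup>2 + 1)))"
  unfolding Let_def f_eq
proof (intro conjI allI impI)
  fix x :: real
  show "\<bar>f x\<bar> \<le> bound_const \<mu> \<nu> * exp (4 * supnorm g) * \<bar>x\<bar> powr (1 - 2 * \<mu>) + (\<mu> - \<nu>) * \<bar>x\<bar> powr (-1)"
    if "\<bar>x\<bar> \<ge> 1"
    using f_bound_far[OF that] mult_right_mono[OF K_le_bound_const(1), of "\<bar>x\<bar> powr (1 - 2 * \<mu>)"]
    by (simp add: a_def)
  show "\<bar>f x\<bar> \<le> 2 * (\<mu> - \<nu>) * pi" using f_bounded by (simp add: a_def)
  assume x: "x \<noteq> 0"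
  have "\<bar>deriv f x\<bar> \<le> K * w x + a * (1 / (x\<^sup>2 + 1))"
    using f_deriv_bound[OF x] DERIV_imp_deriv[OF f_deriv[OF x]] by simp
  also have "K * w x \<le> bound_const \<mu> \<nu> * exp (4 * supnorm g) * w x"
    using K_le_bound_const(2) w_pos[OF x] by (intro mult_right_mono) auto
  finally show "\<bar>deriv f x\<bar> \<le> bound_const \<mu> \<nu> * exp (4 * supnorm g) *
        (1 / (\<bar>x\<bar> powr (2 * \<nu>) * (x\<^sup>2 + 1) powr (\<mu> - \<nu>))) + (\<mu> - \<nu>) * (1 / (x\<^sup>2 + 1))"
    by (simp add: w_def a_def)
qed

(* For part (2) we use the exponent \<gamma> = min(\<mu> - 1/2, 1/2); f decays like |y|^(-\<gamma>) and f' like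
   |y|^(-1-\<gamma>), uniformly for \<parallel>g\<parallel> \<le> M. *)
lemma decay_exponent_bounds: "0 < decay_exponent \<mu>" "decay_exponent \<mu> \<le> 1/2" "decay_exponent \<mu> \<le> \<mu> - 1/2"
  using \<mu>_gt by (auto simp: decay_exponent_def min_def)

lemma f_decay:
  assumes M: "supnorm g \<le> M" and y: "y \<noteq> 0"
  shows "\<bar>f y\<bar> \<le> f_decay_const \<mu> \<nu> M * \<bar>y\<bar> powr (- decay_exponent \<mu>)"
proof -
  define \<gamma> where "\<gamma> = decay_exponent \<mu>"
  define c where "c = bound_const \<mu> \<nu> * exp (4 * M)"
  have c: "0 \<le> c" "bound_const \<mu> \<nu> * exp (4 * supnorm g) \<le> c"
    using deriv_const_pos \<mu>_gt M by (auto simp: c_def bound_const_def intro!: mult_left_mono)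
  have nonneg: "0 \<le> c * \<bar>y\<bar> powr (-\<gamma>)" "0 \<le> a * \<bar>y\<bar> powr (-\<gamma>)" "0 \<le> 2 * a * pi * \<bar>y\<bar> powr (-\<gamma>)"
    using c a_pos by auto
  have "\<bar>f y\<bar> \<le> c * \<bar>y\<bar> powr (-\<gamma>) + a * \<bar>y\<bar> powr (-\<gamma>) + 2 * a * pi * \<bar>y\<bar> powr (-\<gamma>)"
  proof (cases "1 \<le> \<bar>y\<bar>")
    case True
    have "\<bar>f y\<bar> \<le> bound_const \<mu> \<nu> * exp (4 * supnorm g) * \<bar>y\<bar> powr (1 - 2 * \<mu>) + a * \<bar>y\<bar> powr (-1)"
      using deviation_bounds True unfolding Let_def f_eq a_def by blast
    also have "\<dots> \<le> c * \<bar>y\<bar> powr (-\<gamma>) + a * \<bar>y\<bar> powr (-\<gamma>)"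
      using True decay_exponent_bounds c a_pos unfolding \<gamma>_def
      by (intro add_mono mult_mono mult_left_mono powr_mono) auto
    finally show ?thesis using nonneg by linarith
  next
    case False
    have "\<bar>f y\<bar> \<le> 2 * a * pi" by (rule f_bounded)
    also have "\<dots> \<le> 2 * a * pi * \<bar>y\<bar> powr (-\<gamma>)"
    proof -
      have "1 \<le> \<bar>y\<bar> powr (-\<gamma>)"
        using powr_mono2'[of "-\<gamma>" "\<bar>y\<bar>" 1] False y decay_exponent_bounds unfolding \<gamma>_def by auto
      then show ?thesis using mult_left_mono[of 1 _ "2 * a * pi"] a_pos by simp
    qed
    finally show ?thesis using nonneg by linarith
  qed
  then show ?thesis by (simp add: f_decay_const_def c_def \<gamma>_def a_def distrib_right)
qed

lemma f_deriv_decay: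
  assumes M: "supnorm g \<le> M" and y: "1 \<le> \<bar>y\<bar>"
  shows "\<bar>D y - a * (1 / (y\<^sup>2 + 1))\<bar> \<le> deriv_decay_const \<mu> \<nu> M * \<bar>y\<bar> powr (-1 - decay_exponent \<mu>)"
proof -
  define \<gamma> where "\<gamma> = decay_exponent \<mu>"
  have y0: "y \<noteq> 0" using y by auto
  have w_decay: "w y \<le> \<bar>y\<bar> powr (-1-\<gamma>)"
    using w_le[OF y0] powr_mono[of "-2 * \<mu>" "-1-\<gamma>" "\<bar>y\<bar>"] y decay_exponent_bounds unfolding \<gamma>_def by auto
  have sq_decay: "1 / (y\<^sup>2 + 1) \<le> \<bar>y\<bar> powr (-1-\<gamma>)"
  proof -
    have "1 / (y\<^sup>2 + 1) \<le> 1 / y\<^sup>2" using y0 by (intro divide_left_mono) auto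
    also have "1 / y\<^sup>2 = \<bar>y\<bar> powr (-2)"
      using y0 by (simp add: powr_minus divide_inverse powr_numeral[symmetric])
    also have "\<dots> \<le> \<bar>y\<bar> powr (-1-\<gamma>)" using y decay_exponent_bounds unfolding \<gamma>_def by (intro powr_mono) auto
    finally show ?thesis .
  qed
  have K_le: "K \<le> deriv_const \<mu> \<nu> * exp (4 * M)"
    using M deriv_const_pos by (simp add: K_def E_pow_4)
  have "\<bar>D y - a * (1 / (y\<^sup>2 + 1))\<bar> \<le> K * w y + a * (1 / (y\<^sup>2 + 1))"
    by (rule f_deriv_bound[OF y0])
  also have "\<dots> \<le> deriv_const \<mu> \<nu> * exp (4 * M) * \<bar>y\<bar> powr (-1-\<gamma>) + a * \<bar>y\<bar> powr (-1-\<gamma>)"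
    using K_le w_decay sq_decay K_pos w_pos[OF y0] a_pos by (intro add_mono mult_mono mult_left_mono) auto
  also have "\<dots> = deriv_decay_const \<mu> \<nu> M * \<bar>y\<bar> powr (-1 - decay_exponent \<mu>)"
    by (simp add: deriv_decay_const_def \<gamma>_def a_def algebra_simps)
  finally show ?thesis .
qed

lemma f_measurable: "f \<in> borel_measurable borel"
proof -
  have [measurable]: "F \<in> borel_measurable borel" by (rule borel_measurable_continuous_onI[OF F_cont])
  show ?thesis unfolding f_def[abs_def] by measurable
qed

(* Part (2) of the lemma: hilbert_transform_decay applied to f, and |x|^(-\<gamma>) is at most one of
   |x|^(1/2-\<mu>), |x|^(-1/2). *)
lemma hilbert_deviation_bound:
  assumes "supnorm g \<le> M" and "4 \<le> \<bar>x\<bar>"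
  shows "\<bar>hilbert (\<lambda>y. F y - (\<mu> - \<nu>) * theta y) x\<bar> \<le> hilbert_const \<mu> \<nu> M * (\<bar>x\<bar> powr (1/2 - \<mu>) + \<bar>x\<bar> powr (-1/2))"
proof -
  define \<gamma> where "\<gamma> = decay_exponent \<mu>"
  have \<gamma>: "0 < \<gamma>" "\<gamma> < 1" using decay_exponent_bounds unfolding \<gamma>_def by auto
  have const_nonneg: "0 \<le> f_decay_const \<mu> \<nu> M" "0 \<le> deriv_decay_const \<mu> \<nu> M"
    using deriv_const_pos a_pos \<mu>_gt by (auto simp: f_decay_const_def deriv_decay_const_def bound_const_def a_def)
  have "\<bar>hilbert f x\<bar> \<le> hilbert_const \<mu> \<nu> M * \<bar>x\<bar> powr (-\<gamma>)"
    using hilbert_transform_decay[OF \<gamma> const_nonneg f_measurable _ f_deriv _ \<open>4 \<le> \<bar>x\<bar>\<close>]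
      f_decay[OF assms(1)] f_deriv_decay[OF assms(1)]
    by (force simp: hilbert_const_def \<gamma>_def)
  also have "\<dots> \<le> hilbert_const \<mu> \<nu> M * (\<bar>x\<bar> powr (1/2 - \<mu>) + \<bar>x\<bar> powr (-1/2))"
  proof (rule mult_left_mono)
    show "\<bar>x\<bar> powr (-\<gamma>) \<le> \<bar>x\<bar> powr (1/2 - \<mu>) + \<bar>x\<bar> powr (-1/2)"
      by (cases "\<mu> \<le> 1") (auto simp: \<gamma>_def decay_exponent_def min_def)
    show "0 \<le> hilbert_const \<mu> \<nu> M" using const_nonneg \<gamma> by (simp add: hilbert_const_def \<gamma>_def)
  qed
  finally show ?thesis unfolding f_eq .
qed

end

theorem lemma5p4:
  fixes \<mu> \<nu> :: real
  assumes "\<mu> > 1/2" and "0 < \<nu>" and "\<nu> < 1/2"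
  shows
   "(\<exists>c. \<forall>g hinv \<kappa> F. g \<in> Xspace \<and> admissible \<mu> \<nu> g hinv \<kappa> F \<longrightarrow>
        (let f = (\<lambda>x. F x - (\<mu> - \<nu>) * theta x) in
          (\<forall>x. \<bar>x\<bar> \<ge> 1 \<longrightarrow>
             \<bar>f x\<bar> \<le> c * exp (4 * supnorm g) * \<bar>x\<bar> powr (1 - 2 * \<mu>) + (\<mu> - \<nu>) * \<bar>x\<bar> powr (-1)) \<and>
          (\<forall>x. \<bar>f x\<bar> \<le> 2 * (\<mu> - \<nu>) * pi) \<and>
          (\<forall>x. x \<noteq> 0 \<longrightarrow>
             \<bar>deriv f x\<bar> \<le> c * exp (4 * supnorm g) *
                 (1 / (\<bar>x\<bar> powr (2 * \<nu>) * (x\<^sup>2 + 1) powr (\<mu> - \<nu>)))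
               + (\<mu> - \<nu>) * (1 / (x\<^sup>2 + 1))))) \<and>
    (\<forall>M. \<exists>c. \<forall>g hinv \<kappa> F. g \<in> Xspace \<and> supnorm g \<le> M \<and> admissible \<mu> \<nu> g hinv \<kappa> F \<longrightarrow>
        (\<forall>x. \<bar>x\<bar> \<ge> 4 \<longrightarrow>
           \<bar>hilbert (\<lambda>y. F y - (\<mu> - \<nu>) * theta y) x\<bar>
             \<le> c * (\<bar>x\<bar> powr (1/2 - \<mu>) + \<bar>x\<bar> powr (-1/2))))"
proof -
  have data: "admissible_data \<mu> \<nu> g hinv \<kappa> F"
    if "g \<in> Xspace" "admissible \<mu> \<nu> g hinv \<kappa> F" for g hinv \<kappa> F
    using assms that by unfold_locales
  show ?thesis
    using admissible_data.deviation_bounds[OF data] admissible_data.hilbert_deviation_bound[OF data] by blast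
qed

end
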